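(* Let $X$ and $Y$ be disjoint sets, each of cardinality at least two, and let $M \le \mathrm{Sym}(X)$ and $N \le \mathrm{Sym}(Y)$ be nontrivial permutation groups. Then the box product $M \boxtimes N \le \mathrm{Sym}(V_Y)$ satisfies: (1) $M \boxtimes N$ is transitive on $V_Y$ if and only if $M$ is transitive on $X$; (2) $M \boxtimes N$ is primitive on $V_Y$ if and only if $M$ is primitive but not regular on $X$, and $N$ is transitive on $Y$.
   Context: Permutations act on the left. Let $T$ be the $(|X|,|Y|)$-biregular tree, with its natural bipartition $VT = V_X \sqcup V_Y$, where every vertex of $V_X$ has valency $|X|$ and every vertex of $V_Y$ has valency $|Y|$. An arc is an ordered pair $(u,w)$ of adjacent vertices, with origin $o(u,w)=u$ and terminus $t(u,w)=w$; $AT$ is the set of arcs, $A(v)$ the set of arcs with origin $v$, and $\overline{A}(v)$ the set of arcs with terminus $v$. Automorphisms of $T$ act on arcs in the obvious way. A legal colouring of $X$ and $Y$ is a map $c: AT \to X \cup Y$ such that for every $v \in V_X$ the restriction $c|_{A(v)}: A(v)\to X$ is a bijection, for every $v \in V_Y$ the restriction $c|_{A(v)}: A(v) \to Y$ is a bijection, and for every $v \in VT$ the restriction $c|_{\overline{A}(v)}$ is constant. For a legal colouring $c$, define $U_c(M,N)$ to be the set of $g \in \mathrm{Aut}(T)$ with $gV_X = V_X$ such that $c|_{A(gv)} \circ g|_{A(v)} \circ (c|_{A(v)})^{-1}$ lies in $M$ for all $v \in V_X$ and lies in $N$ for all $v \in V_Y$; this is a subgroup of $\mathrm{Aut}(T)$.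 The box product $M \boxtimes N$ is the subgroup of $\mathrm{Sym}(V_Y)$ induced by $U_c(M,N)$; up to permutation isomorphism it does not depend on the choice of legal colouring $c$. A transitive group is primitive if it preserves no equivalence relation other than the trivial and universal ones; it is regular if transitive with trivial point stabilisers. *)

theory Defs
  imports "HOL-Combinatorics.Permutations"
begin

definition perm_group_on :: "'a set \<Rightarrow> ('a \<Rightarrow> 'a) set \<Rightarrow> bool" where
  "perm_group_on \<Omega> G \<longleftrightarrow>
     (\<forall>g\<in>G. g permutes \<Omega>) \<and> id \<in> G \<and>
     (\<forall>g\<in>G. \<forall>h\<in>G. g \<circ> h \<in> G) \<and> (\<forall>g\<in>G. inv g \<in> G)"

definition transitive_on :: "('a \<Rightarrow> 'a) set \<Rightarrow> 'a set \<Rightarrow> bool" where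
  "transitive_on G \<Omega> \<longleftrightarrow> (\<forall>x\<in>\<Omega>. \<forall>y\<in>\<Omega>. \<exists>g\<in>G. g x = y)"

definition preserves_rel :: "('a \<Rightarrow> 'a) set \<Rightarrow> ('a \<times> 'a) set \<Rightarrow> bool" where
  "preserves_rel G R \<longleftrightarrow> (\<forall>g\<in>G. \<forall>(x,y)\<in>R. (g x, g y) \<in> R)"

definition primitive_on :: "('a \<Rightarrow> 'a) set \<Rightarrow> 'a set \<Rightarrow> bool" where
  "primitive_on G \<Omega> \<longleftrightarrow> transitive_on G \<Omega> \<and>
     (\<forall>R. equiv \<Omega> R \<and> preserves_rel G R \<longrightarrow> R = Id_on \<Omega> \<or> R = \<Omega> \<times> \<Omega>)"

definition regular_on :: "('a \<Rightarrow> 'a) set \<Rightarrow> 'a set \<Rightarrow> bool" where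
  "regular_on G \<Omega> \<longleftrightarrow> transitive_on G \<Omega> \<and>
     (\<forall>g\<in>G. \<forall>x\<in>\<Omega>. g x = x \<longrightarrow> (\<forall>y\<in>\<Omega>. g y = y))"

text \<open>Graphs on the vertex type 'v (all elements of 'v are vertices), given by a
  set E of arcs (ordered pairs of adjacent vertices).\<close>
definition reduced_walk :: "('v \<times> 'v) set \<Rightarrow> 'v list \<Rightarrow> bool" where
  "reduced_walk E xs \<longleftrightarrow> xs \<noteq> [] \<and>
     (\<forall>i. Suc i < length xs \<longrightarrow> (xs ! i, xs ! Suc i) \<in> E) \<and>
     (\<forall>i. Suc (Suc i) < length xs \<longrightarrow> xs ! i \<noteq> xs ! Suc (Suc i))"

definition is_tree :: "('v \<times> 'v) set \<Rightarrow> bool" where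
  "is_tree E \<longleftrightarrow> sym E \<and>
     (\<forall>u v. \<exists>!xs. reduced_walk E xs \<and> hd xs = u \<and> last xs = v)"

definition arcs_from :: "('v \<times> 'v) set \<Rightarrow> 'v \<Rightarrow> ('v \<times> 'v) set" where
  "arcs_from E v = {e \<in> E. fst e = v}"

definition arcs_to :: "('v \<times> 'v) set \<Rightarrow> 'v \<Rightarrow> ('v \<times> 'v) set" where
  "arcs_to E v = {e \<in> E. snd e = v}"

definition legal_colouring ::
  "('v \<times> 'v) set \<Rightarrow> 'v set \<Rightarrow> 'v set \<Rightarrow> 'a set \<Rightarrow> 'a set \<Rightarrow> ('v \<times> 'v \<Rightarrow> 'a) \<Rightarrow> bool" where
  "legal_colouring E VX VY X Y c \<longleftrightarrow>
     (\<forall>v\<in>VX. bij_betw c (arcs_from E v) X) \<and>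
     (\<forall>v\<in>VY. bij_betw c (arcs_from E v) Y) \<and>
     (\<forall>v. \<forall>e\<in>arcs_to E v. \<forall>e'\<in>arcs_to E v. c e = c e')"

text \<open>The (|X|,|Y|)-biregular tree with natural bipartition VX, VY, equipped with a
  legal colouring c of X and Y (the colouring forces the valencies).\<close>
definition biregular_coloured_tree ::
  "('v \<times> 'v) set \<Rightarrow> 'v set \<Rightarrow> 'v set \<Rightarrow> 'a set \<Rightarrow> 'a set \<Rightarrow> ('v \<times> 'v \<Rightarrow> 'a) \<Rightarrow> bool" where
  "biregular_coloured_tree E VX VY X Y c \<longleftrightarrow>
     is_tree E \<and> VX \<inter> VY = {} \<and> VX \<union> VY = UNIV \<and>
     (\<forall>(u,w)\<in>E. u \<in> VX \<longleftrightarrow> w \<in> VY) \<and>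
     legal_colouring E VX VY X Y c"

definition tree_aut :: "('v \<times> 'v) set \<Rightarrow> ('v \<Rightarrow> 'v) set" where
  "tree_aut E = {g. bij g \<and> (\<forall>u w. (u, w) \<in> E \<longleftrightarrow> (g u, g w) \<in> E)}"

text \<open>The local action c|A(gv) o g|A(v) o (c|A(v))^{-1} as a map on colours.\<close>
definition local_action ::
  "('v \<times> 'v) set \<Rightarrow> ('v \<times> 'v \<Rightarrow> 'a) \<Rightarrow> ('v \<Rightarrow> 'v) \<Rightarrow> 'v \<Rightarrow> 'a \<Rightarrow> 'a" where
  "local_action E c g v x =
     (let e = the_inv_into (arcs_from E v) c x in c (g (fst e), g (snd e)))"

definition in_group_on :: "('a \<Rightarrow> 'a) set \<Rightarrow> 'a set \<Rightarrow> ('a \<Rightarrow> 'a) \<Rightarrow> bool" where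
  "in_group_on G \<Omega> \<sigma> \<longleftrightarrow> (\<exists>m\<in>G. \<forall>x\<in>\<Omega>. m x = \<sigma> x)"

definition U_c ::
  "('v \<times> 'v) set \<Rightarrow> 'v set \<Rightarrow> 'v set \<Rightarrow> 'a set \<Rightarrow> 'a set \<Rightarrow> ('v \<times> 'v \<Rightarrow> 'a)
   \<Rightarrow> ('a \<Rightarrow> 'a) set \<Rightarrow> ('a \<Rightarrow> 'a) set \<Rightarrow> ('v \<Rightarrow> 'v) set" where
  "U_c E VX VY X Y c M N =
     {g \<in> tree_aut E. g ` VX = VX \<and>
        (\<forall>v\<in>VX. in_group_on M X (local_action E c g v)) \<and>
        (\<forall>v\<in>VY. in_group_on N Y (local_action E c g v))}"

text \<open>The box product: the permutation group on VY induced by U_c(M,N)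
  (each element restricted to VY and extended by the identity).\<close>
definition box_product ::
  "('v \<times> 'v) set \<Rightarrow> 'v set \<Rightarrow> 'v set \<Rightarrow> 'a set \<Rightarrow> 'a set \<Rightarrow> ('v \<times> 'v \<Rightarrow> 'a)
   \<Rightarrow> ('a \<Rightarrow> 'a) set \<Rightarrow> ('a \<Rightarrow> 'a) set \<Rightarrow> ('v \<Rightarrow> 'v) set" where
  "box_product E VX VY X Y c M N =
     (\<lambda>g v. if v \<in> VY then g v else v) ` U_c E VX VY X Y c M N"

end

theory Submission
  imports Defs
begin

text \<open>Local permutations that are compatible along arcs
  extend to an element of U; this gives "uniform" automorphisms acting by one permutation
  of colours everywhere, and automorphisms fixing a whole branch. Transitivity on VY then
  reduces to transitivity of M on the colours of arcs entering VY.

  For primitivity, U-invariant relations on the neighbourhoods of the vertices in VX glue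
  along geodesics to U-invariant equivalences on VY. Gluing a block system of M, the
  N-orbits of colours, or (for regular M) the colour entering a vertex shows that each
  condition is necessary. Conversely, given a non-trivial U-invariant equivalence, a point
  stabiliser of the primitive non-regular group M moving a second point produces two
  related siblings; primitivity of M and transitivity of N make all siblings related, and
  since geodesics between vertices of VY have even length, the equivalence is universal.\<close>

section \<open>Walks and geodesics in trees\<close>

lemma reduced_walk_rev:
  assumes "sym E" "reduced_walk E xs"
  shows "reduced_walk E (rev xs)"
  unfolding reduced_walk_def
proof (intro conjI allI impI)
  have w: "xs \<noteq> []" "\<And>i. Suc i < length xs \<Longrightarrow> (xs ! i, xs ! Suc i) \<in> E"
    using assms(2) unfolding reduced_walk_def by auto
  then show "rev xs \<noteq> []" by simp
  fix i
  assume i: "Suc i < length (rev xs)"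
  have "Suc (length xs - Suc (Suc i)) = length xs - Suc i" using i by auto
  then have "(xs ! (length xs - Suc (Suc i)), xs ! (length xs - Suc i)) \<in> E"
    using w(2)[of "length xs - Suc (Suc i)"] i by auto
  then show "(rev xs ! i, rev xs ! Suc i) \<in> E"
    using i assms(1) by (auto simp: rev_nth sym_def)
next
  fix i
  assume i: "Suc (Suc i) < length (rev xs)"
  have "xs ! (length xs - Suc (Suc (Suc i))) \<noteq> xs ! Suc (Suc (length xs - Suc (Suc (Suc i))))"
    using assms(2) i unfolding reduced_walk_def by auto
  moreover have "Suc (Suc (length xs - Suc (Suc (Suc i)))) = length xs - Suc i" using i by auto
  ultimately show "rev xs ! i \<noteq> rev xs ! Suc (Suc i)" using i by (auto simp: rev_nth)
qed

lemma reduced_walk_take: "reduced_walk E xs \<Longrightarrow> 0 < n \<Longrightarrow> reduced_walk E (take n xs)"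
  unfolding reduced_walk_def by auto

lemma nth_append_tl:
  assumes "xs \<noteq> []" "ys \<noteq> []" "last xs = hd ys" "length xs - 1 \<le> k"
  shows "(xs @ tl ys) ! k = ys ! (k - (length xs - 1))"
proof (cases "k < length xs")
  case True
  then have "k = length xs - 1" using assms(4) by auto
  then show ?thesis using assms by (simp add: nth_append last_conv_nth hd_conv_nth)
next
  case False
  then have "(xs @ tl ys) ! k = tl ys ! (k - length xs)" by (simp add: nth_append)
  also have "\<dots> = ys ! Suc (k - length xs)" using assms(2) by (cases ys) auto
  also have "Suc (k - length xs) = k - (length xs - 1)" using False assms(1) by (cases xs) auto
  finally show ?thesis .
qed

lemma reduced_walk_append:
  assumes x: "reduced_walk E xs" and y: "reduced_walk E ys" and m: "last xs = hd ys"
    and turn: "2 \<le> length xs \<Longrightarrow> 2 \<le> length ys \<Longrightarrow> xs ! (length xs - 2) \<noteq> ys ! 1"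
  shows "reduced_walk E (xs @ tl ys)"
proof -
  let ?n = "length xs" and ?zs = "xs @ tl ys"
  have ne: "xs \<noteq> []" "ys \<noteq> []" using x y unfolding reduced_walk_def by auto
  have right: "?zs ! k = ys ! (k - (?n - 1))" if "?n - 1 \<le> k" for k
    using nth_append_tl[OF ne m that] .
  have len: "length ?zs = ?n + length ys - 1" using ne by (cases ys) auto
  show ?thesis unfolding reduced_walk_def
  proof (intro conjI allI impI)
    show "?zs \<noteq> []" using ne by simp
  next
    fix i assume i: "Suc i < length ?zs"
    show "(?zs ! i, ?zs ! Suc i) \<in> E"
    proof (cases "Suc i < ?n")
      case True then show ?thesis using x by (simp add: reduced_walk_def nth_append)
    next
      case False
      then have "?zs ! i = ys ! (i - (?n - 1))" "?zs ! Suc i = ys ! Suc (i - (?n - 1))"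
        using right[of i] right[of "Suc i"] ne by (auto simp: Suc_diff_le)
      moreover have "Suc (i - (?n - 1)) < length ys" using i False len by auto
      ultimately show ?thesis using y by (simp add: reduced_walk_def)
    qed
  next
    fix i assume i: "Suc (Suc i) < length ?zs"
    consider "Suc (Suc i) < ?n" | "?n - 1 \<le> i" | "i = ?n - 2" "2 \<le> ?n" by linarith
    then show "?zs ! i \<noteq> ?zs ! Suc (Suc i)"
    proof cases
      case 1 then show ?thesis using x by (simp add: reduced_walk_def nth_append)
    next
      case 2
      then have "?zs ! i = ys ! (i - (?n - 1))" "?zs ! Suc (Suc i) = ys ! Suc (Suc (i - (?n - 1)))"
        using right[of i] right[of "Suc (Suc i)"] ne by (auto simp: Suc_diff_le)
      moreover have "Suc (Suc (i - (?n - 1))) < length ys" using i 2 len by auto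
      ultimately show ?thesis using y by (simp add: reduced_walk_def)
    next
      case 3
      then have "?zs ! i = xs ! (?n - 2)" by (auto simp: nth_append)
      moreover have "?zs ! Suc (Suc i) = ys ! 1"
      proof -
        have "Suc (Suc i) - (?n - 1) = 1" "?n - 1 \<le> Suc (Suc i)" using 3 by auto
        then show ?thesis using right by metis
      qed
      moreover have "2 \<le> length ys" using i len 3 by auto
      ultimately show ?thesis using turn 3 by auto
    qed
  qed
qed

lemma reduced_walk_snoc:
  "reduced_walk E xs \<Longrightarrow> (last xs, v) \<in> E \<Longrightarrow> (2 \<le> length xs \<Longrightarrow> xs ! (length xs - 2) \<noteq> v)
   \<Longrightarrow> reduced_walk E (xs @ [v])"
  using reduced_walk_append[of E xs "[last xs, v]"] unfolding reduced_walk_def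
  by (auto simp: nth_Cons split: nat.splits)

definition walk_on :: "('v \<times> 'v) set \<Rightarrow> 'v list \<Rightarrow> bool" where
  "walk_on E xs \<longleftrightarrow> xs \<noteq> [] \<and> (\<forall>i. Suc i < length xs \<longrightarrow> (xs ! i, xs ! Suc i) \<in> E)"

lemma reduced_walk_imp_walk_on: "reduced_walk E xs \<Longrightarrow> walk_on E xs"
  unfolding reduced_walk_def walk_on_def by auto

lemma walk_on_append:
  assumes x: "walk_on E xs" and y: "walk_on E ys" and m: "last xs = hd ys"
  shows "walk_on E (xs @ tl ys)"
  unfolding walk_on_def
proof (intro conjI allI impI)
  let ?n = "length xs" and ?zs = "xs @ tl ys"
  have ne: "xs \<noteq> []" "ys \<noteq> []" using x y unfolding walk_on_def by auto
  then show "?zs \<noteq> []" by simp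
  fix i assume i: "Suc i < length ?zs"
  show "(?zs ! i, ?zs ! Suc i) \<in> E"
  proof (cases "Suc i < ?n")
    case True then show ?thesis using x by (simp add: walk_on_def nth_append)
  next
    case False
    then have "?zs ! i = ys ! (i - (?n - 1))" "?zs ! Suc i = ys ! Suc (i - (?n - 1))"
      using nth_append_tl[OF ne m, of i] nth_append_tl[OF ne m, of "Suc i"] ne
      by (auto simp: Suc_diff_le)
    moreover have "Suc (i - (?n - 1)) < length ys" using i False ne by (cases ys) auto
    ultimately show ?thesis using y by (simp add: walk_on_def)
  qed
qed

lemma walk_on_cut_backtrack:
  assumes w: "walk_on E xs" and i: "Suc (Suc i) < length xs" "xs ! i = xs ! Suc (Suc i)"
  defines "ys \<equiv> take (Suc i) xs @ drop (Suc (Suc (Suc i))) xs"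
  shows "walk_on E ys" "hd ys = hd xs" "last ys = last xs" "length ys < length xs"
    "set ys \<subseteq> set xs"
proof -
  have idx: "ys ! k = (if k \<le> i then xs ! k else xs ! (k + 2))" if "k < length ys" for k
    using that i unfolding ys_def by (auto simp: nth_append min_def)
  have len: "length ys = length xs - 2" using i unfolding ys_def by auto
  show "length ys < length xs" using len i by simp
  show "set ys \<subseteq> set xs" unfolding ys_def using set_take_subset set_drop_subset by fastforce
  show "hd ys = hd xs" unfolding ys_def using i by (cases xs) auto
  show "last ys = last xs"
  proof (cases "Suc (Suc (Suc i)) < length xs")
    case True then show ?thesis unfolding ys_def by (simp add: last_append)
  next
    case False
    then have "length xs = Suc (Suc (Suc i))" using i by auto
    then have "last xs = xs ! Suc (Suc i)"
      by (metis diff_Suc_1 last_conv_nth list.size(3) nat.distinct(1))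
    moreover have "ys = take (Suc i) xs" unfolding ys_def using \<open>length xs = _\<close> by simp
    moreover have "last (take (Suc i) xs) = xs ! i"
      using i by (simp add: last_conv_nth take_Suc_conv_app_nth)
    ultimately show ?thesis using i by simp
  qed
  show "walk_on E ys" unfolding walk_on_def
  proof (intro conjI allI impI)
    show "ys \<noteq> []" using len i by auto
    fix k assume k: "Suc k < length ys"
    consider "Suc k \<le> i" | "k = i" | "i < k" by linarith
    then show "(ys ! k, ys ! Suc k) \<in> E"
    proof cases
      case 1 then show ?thesis using idx k w len unfolding walk_on_def by auto
    next
      case 2
      then have "ys ! k = xs ! Suc (Suc i)" "ys ! Suc k = xs ! Suc (Suc (Suc i))"
        using idx k i by auto
      then show ?thesis using w k len 2 unfolding walk_on_def by auto
    next
      case 3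
      then have "ys ! k = xs ! (k + 2)" "ys ! Suc k = xs ! Suc (k + 2)" using idx k by auto
      then show ?thesis using w k len unfolding walk_on_def by auto
    qed
  qed
qed

locale tree =
  fixes E :: "('v \<times> 'v) set"
  assumes is_tree: "is_tree E"
begin

lemma sym_arcs: "sym E" using is_tree unfolding is_tree_def by simp

lemma arc_sym: "(u, v) \<in> E \<Longrightarrow> (v, u) \<in> E" using sym_arcs unfolding sym_def by blast

definition geodesic :: "'v \<Rightarrow> 'v \<Rightarrow> 'v list" where
  "geodesic u v = (THE xs. reduced_walk E xs \<and> hd xs = u \<and> last xs = v)"

lemma geodesic_ex1: "\<exists>!xs. reduced_walk E xs \<and> hd xs = u \<and> last xs = v"
  using is_tree unfolding is_tree_def by blast

lemma geodesic: "reduced_walk E (geodesic u v)" "hd (geodesic u v) = u" "last (geodesic u v) = v"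
  using theI'[OF geodesic_ex1[of u v]] unfolding geodesic_def by auto

lemma geodesic_unique: "reduced_walk E xs \<Longrightarrow> hd xs = u \<Longrightarrow> last xs = v \<Longrightarrow> geodesic u v = xs"
  using geodesic geodesic_ex1 by blast

lemma geodesic_ne: "geodesic u v \<noteq> []"
  using geodesic(1) unfolding reduced_walk_def by blast

lemma geodesic_self: "geodesic u u = [u]"
  by (rule geodesic_unique) (auto simp: reduced_walk_def)

lemma geodesic_arc: "(u, v) \<in> E \<Longrightarrow> geodesic u v = [u, v]"
  by (rule geodesic_unique) (auto simp: reduced_walk_def nth_Cons split: nat.splits)

lemma no_loop: "(u, u) \<notin> E"
  using geodesic_arc[of u u] geodesic_self[of u] by auto

lemma geodesic_rev: "geodesic v u = rev (geodesic u v)"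
  by (rule geodesic_unique) (auto simp: reduced_walk_rev[OF sym_arcs] geodesic hd_rev last_rev)

lemma length_geodesic_eq_1_iff: "length (geodesic u v) = 1 \<longleftrightarrow> u = v"
proof
  assume "length (geodesic u v) = 1"
  then obtain w where "geodesic u v = [w]" by (cases "geodesic u v") auto
  then show "u = v" using geodesic(2,3)[of u v] by auto
qed (simp add: geodesic_self)

lemma length_geodesic_ge_2: "u \<noteq> v \<Longrightarrow> 2 \<le> length (geodesic u v)"
proof -
  assume "u \<noteq> v"
  then have "length (geodesic u v) \<noteq> 1" "length (geodesic u v) \<noteq> 0"
    using length_geodesic_eq_1_iff[of u v] geodesic_ne[of u v] by auto
  then show ?thesis by arith
qed

lemma geodesic_nth_0: "geodesic u v ! 0 = u"
  using geodesic(2) geodesic_ne by (simp add: hd_conv_nth)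

lemma geodesic_nth_last: "geodesic u v ! (length (geodesic u v) - 1) = v"
  using geodesic(3) geodesic_ne by (simp add: last_conv_nth)

lemma geodesic_arcs: "Suc i < length (geodesic u v) \<Longrightarrow> (geodesic u v ! i, geodesic u v ! Suc i) \<in> E"
  using geodesic(1) unfolding reduced_walk_def by blast

lemma geodesic_no_backtrack:
  "Suc (Suc i) < length (geodesic u v) \<Longrightarrow> geodesic u v ! i \<noteq> geodesic u v ! Suc (Suc i)"
  using geodesic(1) unfolding reduced_walk_def by blast

lemma take_geodesic:
  "0 < n \<Longrightarrow> n \<le> length (geodesic u v) \<Longrightarrow> take n (geodesic u v) = geodesic u (geodesic u v ! (n - 1))"
  apply (rule sym, rule geodesic_unique)
  using geodesic_ne geodesic(1) reduced_walk_take[OF geodesic(1)] geodesic_nth_0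
  by (auto simp: hd_conv_nth last_conv_nth min_def)

lemma set_geodesic_subset_walk:
  "walk_on E xs \<Longrightarrow> set (geodesic (hd xs) (last xs)) \<subseteq> set xs"
proof (induction "length xs" arbitrary: xs rule: less_induct)
  case less
  show ?case
  proof (cases "reduced_walk E xs")
    case True then show ?thesis using geodesic_unique by simp
  next
    case False
    then obtain i where "Suc (Suc i) < length xs" "xs ! i = xs ! Suc (Suc i)"
      using less.prems unfolding walk_on_def reduced_walk_def by auto
    from walk_on_cut_backtrack[OF less.prems this] less.hyps show ?thesis by fastforce
  qed
qed

lemma set_geodesic_triangle: "set (geodesic u w) \<subseteq> set (geodesic u v) \<union> set (geodesic v w)"
proof -
  let ?xs = "geodesic u v @ tl (geodesic v w)"
  have "walk_on E ?xs"
    by (rule walk_on_append) (auto simp: reduced_walk_imp_walk_on geodesic)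
  moreover have "hd ?xs = u" using geodesic geodesic_ne by auto
  moreover have "last ?xs = w"
  proof (cases "tl (geodesic v w) = []")
    case True
    then have "geodesic v w = [v]" using geodesic_ne geodesic(2)[of v w] by (cases "geodesic v w") auto
    then show ?thesis using True geodesic(3)[of v w] geodesic(3)[of u v] by auto
  next
    case False
    then show ?thesis using geodesic(3)[of v w] geodesic_ne by (simp add: last_tl)
  qed
  ultimately have "set (geodesic u w) \<subseteq> set ?xs" using set_geodesic_subset_walk by metis
  moreover have "set (tl (geodesic v w)) \<subseteq> set (geodesic v w)" by (cases "geodesic v w") auto
  ultimately show ?thesis by auto
qed

definition toward :: "'v \<Rightarrow> 'v \<Rightarrow> 'v" where
  "toward x y = geodesic x y ! 1"

lemma toward_arc: "x \<noteq> y \<Longrightarrow> (x, toward x y) \<in> E"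
  using geodesic_arcs[of 0 x y] geodesic_nth_0 length_geodesic_ge_2 unfolding toward_def by fastforce

lemma toward_of_arc: "(x, y) \<in> E \<Longrightarrow> toward x y = y"
  using geodesic_arc unfolding toward_def by simp

text \<open>If x avoids the geodesic from y to y', then the geodesics from x to y and to y'
  leave x along the same arc: otherwise their concatenation would be a reduced walk
  from y to y' through x.\<close>
lemma toward_eq_if_not_on_geodesic:
  assumes "x \<noteq> y" "x \<noteq> y'" "x \<notin> set (geodesic y y')"
  shows "toward x y = toward x y'"
proof (rule ccontr)
  assume ne: "toward x y \<noteq> toward x y'"
  let ?A = "rev (geodesic x y)" and ?B = "geodesic x y'"
  have l2: "2 \<le> length (geodesic x y)" "2 \<le> length ?B" using assms length_geodesic_ge_2 by auto
  have "reduced_walk E (?A @ tl ?B)"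
  proof (rule reduced_walk_append)
    show "reduced_walk E ?A" using reduced_walk_rev[OF sym_arcs] geodesic by blast
    show "reduced_walk E ?B" using geodesic by blast
    show "last ?A = hd ?B" using geodesic geodesic_ne by (simp add: last_rev)
    have "?A ! (length ?A - 2) = geodesic x y ! 1" using l2 by (simp add: rev_nth)
    then show "?A ! (length ?A - 2) \<noteq> ?B ! 1" using ne unfolding toward_def by simp
  qed
  moreover have "hd (?A @ tl ?B) = y" using geodesic geodesic_ne by (simp add: hd_rev)
  moreover have "last (?A @ tl ?B) = y'"
    using geodesic(3)[of x y'] l2 by (cases "geodesic x y'") (auto simp: last_tl)
  ultimately have "geodesic y y' = ?A @ tl ?B" using geodesic_unique by blast
  moreover have "x \<in> set ?A" using geodesic(2)[of x y] geodesic_ne hd_in_set set_rev by metis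
  ultimately show False using assms by auto
qed

text \<open>Only meaningful for v \<noteq> r.\<close>
definition parent :: "'v \<Rightarrow> 'v \<Rightarrow> 'v" where
  "parent r v = geodesic r v ! (length (geodesic r v) - 2)"

lemma geodesic_parent: assumes "v \<noteq> r" shows "geodesic r v = geodesic r (parent r v) @ [v]"
proof -
  let ?W = "geodesic r v" let ?n = "length ?W"
  have n2: "2 \<le> ?n" using length_geodesic_ge_2 assms by auto
  have "take (?n - 1) ?W = geodesic r (?W ! (?n - 1 - 1))" using take_geodesic[of "?n - 1" r v] n2 by auto
  moreover have "?n - 1 - 1 = ?n - 2" by arith
  ultimately have "take (?n - 1) ?W = geodesic r (parent r v)" unfolding parent_def by simp
  moreover have "?W = take (?n - 1) ?W @ [last ?W]" using geodesic_ne
    by (metis append_butlast_last_id butlast_conv_take)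
  ultimately show ?thesis using geodesic(3) by metis
qed

lemma length_geodesic_parent: "v \<noteq> r \<Longrightarrow> length (geodesic r (parent r v)) < length (geodesic r v)"
  using geodesic_parent by (metis length_append_singleton lessI)

lemma parent_arc: assumes "v \<noteq> r" shows "(parent r v, v) \<in> E"
proof -
  let ?W = "geodesic r v" let ?n = "length ?W"
  have n2: "2 \<le> ?n" using length_geodesic_ge_2 assms by auto
  have "(?W ! (?n - 2), ?W ! Suc (?n - 2)) \<in> E" using geodesic_arcs[of "?n - 2" r v] n2 by auto
  moreover have "Suc (?n - 2) = ?n - 1" using n2 by arith
  ultimately show ?thesis using geodesic_nth_last unfolding parent_def by metis
qed

lemma parent_of_root_arc: "(r, v) \<in> E \<Longrightarrow> v \<noteq> r \<and> parent r v = r"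
  using geodesic_arc no_loop unfolding parent_def by auto

lemma arc_parent_cases:
  assumes e: "(u, v) \<in> E"
  shows "(v \<noteq> r \<and> parent r v = u) \<or> (u \<noteq> r \<and> parent r u = v)"
proof (cases "u = r")
  case True then show ?thesis using parent_of_root_arc e by auto
next
  case False
  let ?W = "geodesic r u"
  have n2: "2 \<le> length ?W" using length_geodesic_ge_2 False by auto
  show ?thesis
  proof (cases "?W ! (length ?W - 2) = v")
    case True then show ?thesis using False unfolding parent_def by auto
  next
    case ne: False
    have "reduced_walk E (?W @ [v])" using reduced_walk_snoc[of E ?W v] geodesic e ne by auto
    then have wv: "geodesic r v = ?W @ [v]" using geodesic geodesic_unique geodesic_ne
      by (metis append_is_Nil_conv hd_append2 last_snoc)
    then have "v \<noteq> r" using n2 geodesic_self[of r] by auto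
    moreover have "parent r v = u" using wv geodesic(3)[of r u] geodesic_ne unfolding parent_def
      by (simp add: last_conv_nth nth_append)
    ultimately show ?thesis by auto
  qed
qed

lemma toward_parent: "v \<noteq> r \<Longrightarrow> parent r v \<noteq> r \<Longrightarrow> toward r v = toward r (parent r v)"
  using geodesic_parent length_geodesic_ge_2[of r "parent r v"] unfolding toward_def
  by (simp add: nth_append)

lemma toward_parent_root: "v \<noteq> r \<Longrightarrow> parent r v = r \<Longrightarrow> toward r v = v"
  using geodesic_parent[of v r] geodesic_self unfolding toward_def by auto

lemma depth_induct [case_names less]:
  assumes "\<And>v. (\<And>w. length (geodesic r w) < length (geodesic r v) \<Longrightarrow> P w) \<Longrightarrow> P v"
  shows "P v"
  using assms by (induction "length (geodesic r v)" arbitrary: v rule: less_induct) blast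

lemma geodesic_aut:
  assumes g: "g \<in> tree_aut E" shows "geodesic (g u) (g v) = map g (geodesic u v)"
proof (rule geodesic_unique)
  have "inj g" "\<And>u w. (u, w) \<in> E \<Longrightarrow> (g u, g w) \<in> E"
    using g unfolding tree_aut_def bij_def by auto
  then show "reduced_walk E (map g (geodesic u v))"
    using geodesic(1)[of u v] unfolding reduced_walk_def by (auto simp: inj_eq)
  show "hd (map g (geodesic u v)) = g u" using geodesic geodesic_ne by (simp add: hd_map)
  show "last (map g (geodesic u v)) = g v" using geodesic geodesic_ne by (simp add: last_map)
qed

lemma toward_aut: "g \<in> tree_aut E \<Longrightarrow> x \<noteq> y \<Longrightarrow> toward (g x) (g y) = g (toward x y)"
  using geodesic_aut length_geodesic_ge_2[of x y] unfolding toward_def by auto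

end

section \<open>Legal colourings\<close>

locale coloured_tree =
  fixes E :: "('v \<times> 'v) set" and VX VY :: "'v set" and X Y :: "'a set"
    and c :: "'v \<times> 'v \<Rightarrow> 'a"
  assumes biregular: "biregular_coloured_tree E VX VY X Y c"
    and two_X: "\<exists>a\<in>X. \<exists>b\<in>X. a \<noteq> b" and two_Y: "\<exists>a\<in>Y. \<exists>b\<in>Y. a \<noteq> b"
begin

sublocale tree E
  using biregular unfolding biregular_coloured_tree_def by unfold_locales simp

lemma VY_iff: "v \<in> VY \<longleftrightarrow> v \<notin> VX"
  using biregular unfolding biregular_coloured_tree_def by auto

lemma arc_VX_iff: "(u, w) \<in> E \<Longrightarrow> u \<in> VX \<longleftrightarrow> w \<notin> VX"
  using biregular VY_iff unfolding biregular_coloured_tree_def by auto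

lemma arc_from_VX: "x \<in> VX \<Longrightarrow> (x, y) \<in> E \<Longrightarrow> y \<in> VY"
  using arc_VX_iff VY_iff by blast

lemma arc_from_VY: "y \<in> VY \<Longrightarrow> (y, x) \<in> E \<Longrightarrow> x \<in> VX"
  using arc_VX_iff VY_iff by blast

definition colours :: "'v \<Rightarrow> 'a set" where
  "colours v = (if v \<in> VX then X else Y)"

lemma colours_VX: "v \<in> VX \<Longrightarrow> colours v = X" and colours_VY: "v \<in> VY \<Longrightarrow> colours v = Y"
  unfolding colours_def using VY_iff by auto

lemma colours_eq: "(u \<in> VX \<longleftrightarrow> w \<in> VX) \<Longrightarrow> colours u = colours w"
  unfolding colours_def by auto

lemma colour_bij: "bij_betw c (arcs_from E v) (colours v)"
  using biregular VY_iff unfolding biregular_coloured_tree_def legal_colouring_def colours_def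
  by auto

lemma colour_mem: "(v, w) \<in> E \<Longrightarrow> c (v, w) \<in> colours v"
  using colour_bij[of v] unfolding bij_betw_def arcs_from_def by auto

lemma colour_inj: "(v, w) \<in> E \<Longrightarrow> (v, w') \<in> E \<Longrightarrow> c (v, w) = c (v, w') \<Longrightarrow> w = w'"
  using colour_bij[of v] unfolding bij_betw_def inj_on_def arcs_from_def by auto

lemma ex1_arc_of_colour:
  assumes "a \<in> colours v" shows "\<exists>!w. (v, w) \<in> E \<and> c (v, w) = a"
proof -
  obtain e where "e \<in> arcs_from E v" "c e = a"
    using colour_bij[of v] assms unfolding bij_betw_def by (metis imageE)
  then have "(v, snd e) \<in> E \<and> c (v, snd e) = a" unfolding arcs_from_def by (cases e) auto
  then show ?thesis using colour_inj by blast
qed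

definition nbr :: "'v \<Rightarrow> 'a \<Rightarrow> 'v" where
  "nbr v a = (THE w. (v, w) \<in> E \<and> c (v, w) = a)"

lemma nbr: "a \<in> colours v \<Longrightarrow> (v, nbr v a) \<in> E \<and> c (v, nbr v a) = a"
  unfolding nbr_def by (rule theI') (rule ex1_arc_of_colour)

lemma nbr_colour: "(v, w) \<in> E \<Longrightarrow> nbr v (c (v, w)) = w"
  using nbr[OF colour_mem] colour_inj by blast

lemma ex_arc_to: "\<exists>w. (w, v) \<in> E"
proof -
  obtain a where "a \<in> colours v" using two_X two_Y unfolding colours_def by (cases "v \<in> VX") auto
  then show ?thesis using nbr arc_sym by blast
qed

text \<open>The common colour of all arcs with terminus v.\<close>
definition colour_in :: "'v \<Rightarrow> 'a" where
  "colour_in v = c (SOME w. (w, v) \<in> E, v)"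

lemma colour_in: assumes "(w, v) \<in> E" shows "c (w, v) = colour_in v"
proof -
  have "((SOME w. (w, v) \<in> E), v) \<in> E" using ex_arc_to someI_ex by metis
  then have "((SOME w. (w, v) \<in> E), v) \<in> arcs_to E v" "(w, v) \<in> arcs_to E v"
    using assms unfolding arcs_to_def by auto
  moreover have "\<forall>e\<in>arcs_to E v. \<forall>e'\<in>arcs_to E v. c e = c e'"
    using biregular unfolding biregular_coloured_tree_def legal_colouring_def by blast
  ultimately show ?thesis unfolding colour_in_def by blast
qed

lemma colour_in_inj: "(x, y) \<in> E \<Longrightarrow> (x, y') \<in> E \<Longrightarrow> colour_in y = colour_in y' \<Longrightarrow> y = y'"
  using colour_in colour_inj by metis

lemma nbr_colour_in: "(x, y) \<in> E \<Longrightarrow> nbr x (colour_in y) = y"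
  using nbr_colour colour_in by metis

lemma colour_in_VY: "y \<in> VY \<Longrightarrow> colour_in y \<in> X"
  using ex_arc_to[of y] colour_in colour_mem arc_VX_iff colours_VX VY_iff by metis

lemma colour_in_VX: "x \<in> VX \<Longrightarrow> colour_in x \<in> Y"
  using ex_arc_to[of x] colour_in colour_mem arc_VX_iff colours_VY VY_iff by metis

lemma nbr_VX: "x \<in> VX \<Longrightarrow> a \<in> X \<Longrightarrow> (x, nbr x a) \<in> E \<and> nbr x a \<in> VY \<and> colour_in (nbr x a) = a"
  using nbr[of a x] colours_VX arc_from_VX colour_in by metis

lemma nbr_VY: "y \<in> VY \<Longrightarrow> a \<in> Y \<Longrightarrow> (y, nbr y a) \<in> E \<and> nbr y a \<in> VX \<and> colour_in (nbr y a) = a"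
  using nbr[of a y] colours_VY arc_from_VY colour_in by metis

lemma ex_VX: "\<exists>x. x \<in> VX"
  using ex_arc_to arc_VX_iff by blast

lemma ex_VY: "\<exists>y. y \<in> VY"
  using ex_VX nbr_VX two_X by blast

lemma two_arcs_from_VX: "x \<in> VX \<Longrightarrow> \<exists>y y'. (x, y) \<in> E \<and> (x, y') \<in> E \<and> y \<noteq> y'"
  using two_X nbr_VX by metis

lemma geodesic_nth_VX_iff:
  "i < length (geodesic u v) \<Longrightarrow> geodesic u v ! i \<in> VX \<longleftrightarrow> (u \<in> VX \<longleftrightarrow> even i)"
proof (induction i)
  case 0 then show ?case using geodesic_nth_0 by simp
next
  case (Suc i)
  then have "(geodesic u v ! i, geodesic u v ! Suc i) \<in> E" using geodesic_arcs by auto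
  then show ?case using Suc arc_VX_iff by auto
qed

lemma local_action_colour:
  assumes "(v, w) \<in> E" shows "local_action E c g v (c (v, w)) = c (g v, g w)"
proof -
  have "the_inv_into (arcs_from E v) c (c (v, w)) = (v, w)"
    using colour_bij[of v] assms unfolding bij_betw_def arcs_from_def
    by (auto intro: the_inv_into_f_f)
  then show ?thesis unfolding local_action_def by simp
qed

end

section \<open>Automorphisms with prescribed local actions\<close>

fun fold_arcs :: "('v \<Rightarrow> 'v \<Rightarrow> 'v \<Rightarrow> 'v) \<Rightarrow> 'v \<Rightarrow> 'v list \<Rightarrow> 'v" where
  "fold_arcs f w (u # v # vs) = fold_arcs f (f w u v) (v # vs)"
| "fold_arcs f w _ = w"

lemma fold_arcs_snoc: "fold_arcs f w (xs @ [u, v]) = f (fold_arcs f w (xs @ [u])) u v"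
proof (induction xs arbitrary: w)
  case (Cons x xs)
  then show ?case by (cases xs) auto
qed simp

text \<open>An automorphism with prescribed local action \<pi> v at every vertex v, built outward
  from r \<mapsto> r' along geodesics. Arcs entering a common vertex share their colour, so
  \<pi> v must agree with the local action at the grandparent of v on the colour entering
  the parent of v; for children of the root that colour must go to the one entering r'.\<close>
locale local_extension = coloured_tree E VX VY X Y c
  for E :: "('v \<times> 'v) set" and VX VY :: "'v set" and X Y :: "'a set" and c :: "'v \<times> 'v \<Rightarrow> 'a" +
  fixes r r' :: 'v and \<pi> :: "'v \<Rightarrow> 'a \<Rightarrow> 'a"
  assumes root_VX_iff: "r \<in> VX \<longleftrightarrow> r' \<in> VX"
    and local_bij: "\<And>v. bij_betw (\<pi> v) (colours v) (colours v)"
    and compatible: "\<And>v. v \<noteq> r \<Longrightarrow> parent r v \<noteq> r \<Longrightarrow>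
      \<pi> v (colour_in (parent r v)) = \<pi> (parent r (parent r v)) (colour_in (parent r v))"
    and compatible_root: "\<And>v. v \<noteq> r \<Longrightarrow> parent r v = r \<Longrightarrow> \<pi> v (colour_in r) = colour_in r'"
begin

definition ext :: "'v \<Rightarrow> 'v" where
  "ext v = fold_arcs (\<lambda>w u v. nbr w (\<pi> u (c (u, v)))) r' (geodesic r v)"

lemma ext_root: "ext r = r'"
  unfolding ext_def geodesic_self by simp

lemma ext_parent:
  assumes "v \<noteq> r"
  shows "ext v = nbr (ext (parent r v)) (\<pi> (parent r v) (c (parent r v, v)))"
proof -
  obtain ys where ys: "geodesic r (parent r v) = ys @ [parent r v]"
    using geodesic(3) geodesic_ne by (metis append_butlast_last_id)
  then have "geodesic r v = ys @ [parent r v, v]" using geodesic_parent[OF assms] by simp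
  then show ?thesis unfolding ext_def using ys fold_arcs_snoc by simp
qed

lemma local_mem: "a \<in> colours v \<Longrightarrow> \<pi> v a \<in> colours v"
  using local_bij bij_betwE by blast

lemma local_inj: "a \<in> colours v \<Longrightarrow> b \<in> colours v \<Longrightarrow> \<pi> v a = \<pi> v b \<Longrightarrow> a = b"
  using local_bij[of v] unfolding bij_betw_def inj_on_def by auto

lemma ext_VX_iff: "ext v \<in> VX \<longleftrightarrow> v \<in> VX"
proof (induction v rule: depth_induct[where r = r])
  case (less v)
  show ?case
  proof (cases "v = r")
    case True then show ?thesis using ext_root root_VX_iff by simp
  next
    case False
    let ?p = "parent r v"
    have IH: "ext ?p \<in> VX \<longleftrightarrow> ?p \<in> VX" using less length_geodesic_parent[OF False] by blast
    have e: "(?p, v) \<in> E" using parent_arc[OF False] .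
    have "\<pi> ?p (c (?p, v)) \<in> colours (ext ?p)" using local_mem colour_mem[OF e] colours_eq[OF IH] by simp
    then have "(ext ?p, ext v) \<in> E" using ext_parent[OF False] nbr by simp
    then show ?thesis using arc_VX_iff e IH by blast
  qed
qed

lemma ext_parent_arc:
  assumes "v \<noteq> r"
  shows "(ext (parent r v), ext v) \<in> E \<and> c (ext (parent r v), ext v) = \<pi> (parent r v) (c (parent r v, v))"
proof -
  let ?p = "parent r v"
  have "\<pi> ?p (c (?p, v)) \<in> colours (ext ?p)"
    using local_mem colour_mem[OF parent_arc[OF assms]] colours_eq[OF ext_VX_iff[of ?p]] by simp
  then show ?thesis using ext_parent[OF assms] nbr by simp
qed

lemma ext_arc:
  assumes e: "(u, v) \<in> E"
  shows "(ext u, ext v) \<in> E \<and> c (ext u, ext v) = \<pi> u (c (u, v))"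
  using arc_parent_cases[OF e, of r]
proof
  assume "v \<noteq> r \<and> parent r v = u" then show ?thesis using ext_parent_arc by auto
next
  assume h: "u \<noteq> r \<and> parent r u = v"
  then have e': "(ext u, ext v) \<in> E" using ext_parent_arc arc_sym by auto
  have "\<pi> u (colour_in v) = colour_in (ext v)"
  proof (cases "v = r")
    case True then show ?thesis using compatible_root h ext_root by auto
  next
    case False
    have "\<pi> u (colour_in v) = \<pi> (parent r v) (colour_in v)" using compatible h False by auto
    also have "\<dots> = \<pi> (parent r v) (c (parent r v, v))" using colour_in parent_arc[OF False] by auto
    also have "\<dots> = colour_in (ext v)" using ext_parent_arc[OF False] colour_in by auto
    finally show ?thesis .
  qed
  then show ?thesis using e e' colour_in by simp
qed

lemma inj_ext: "inj ext"
proof (rule injI)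
  fix u v assume eq: "ext u = ext v"
  let ?W = "geodesic u v"
  have "reduced_walk E (map ext ?W)" unfolding reduced_walk_def
  proof (intro conjI allI impI)
    show "map ext ?W \<noteq> []" using geodesic_ne by simp
  next
    fix i assume "Suc i < length (map ext ?W)"
    then show "(map ext ?W ! i, map ext ?W ! Suc i) \<in> E" using geodesic_arcs ext_arc by auto
  next
    fix i assume i: "Suc (Suc i) < length (map ext ?W)"
    have e1: "(?W ! Suc i, ?W ! i) \<in> E" and e2: "(?W ! Suc i, ?W ! Suc (Suc i)) \<in> E"
      using geodesic_arcs[of i u v] geodesic_arcs[of "Suc i" u v] i arc_sym by auto
    have "c (?W ! Suc i, ?W ! i) \<noteq> c (?W ! Suc i, ?W ! Suc (Suc i))"
      using colour_inj[OF e1 e2] geodesic_no_backtrack[of i u v] i by auto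
    then have "\<pi> (?W ! Suc i) (c (?W ! Suc i, ?W ! i)) \<noteq> \<pi> (?W ! Suc i) (c (?W ! Suc i, ?W ! Suc (Suc i)))"
      using local_inj[OF colour_mem[OF e1] colour_mem[OF e2]] by blast
    then have "c (ext (?W ! Suc i), ext (?W ! i)) \<noteq> c (ext (?W ! Suc i), ext (?W ! Suc (Suc i)))"
      using ext_arc[OF e1] ext_arc[OF e2] by simp
    then show "map ext ?W ! i \<noteq> map ext ?W ! Suc (Suc i)" using i by auto
  qed
  moreover have "hd (map ext ?W) = ext u" "last (map ext ?W) = ext v"
    using geodesic geodesic_ne by (auto simp: hd_map last_map)
  ultimately have "geodesic (ext u) (ext v) = map ext ?W" by (rule geodesic_unique)
  then have "[ext v] = map ext ?W" unfolding eq geodesic_self .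
  then have "length [ext v] = length (map ext ?W)" by (rule arg_cong)
  then show "u = v" using length_geodesic_eq_1_iff[of u v] by simp
qed

lemma ext_arc_onto: assumes e: "(ext u, w') \<in> E" shows "\<exists>v. (u, v) \<in> E \<and> ext v = w'"
proof -
  have "c (ext u, w') \<in> colours u" using colour_mem[OF e] colours_eq[OF ext_VX_iff[of u]] by simp
  then obtain a where a: "a \<in> colours u" "\<pi> u a = c (ext u, w')"
    using local_bij[of u] unfolding bij_betw_def by (metis imageE)
  have ev: "(u, nbr u a) \<in> E" "c (u, nbr u a) = a" using nbr a by auto
  then have "(ext u, ext (nbr u a)) \<in> E" "c (ext u, ext (nbr u a)) = c (ext u, w')"
    using ext_arc a by auto
  then have "ext (nbr u a) = w'" using colour_inj e by blast
  then show ?thesis using ev by blast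
qed

lemma surj_ext: "surj ext"
proof -
  have "\<exists>v. ext v = w'" for w'
  proof (induction w' rule: depth_induct[where r = r'])
    case (less w')
    show ?case
    proof (cases "w' = r'")
      case True then show ?thesis using ext_root by auto
    next
      case False
      obtain v where "ext v = parent r' w'" using less length_geodesic_parent[OF False] by blast
      then show ?thesis using parent_arc[OF False] ext_arc_onto[of v w'] by auto
    qed
  qed
  then show ?thesis by (metis surjI)
qed

lemma ext_tree_aut: "ext \<in> tree_aut E"
  unfolding tree_aut_def
proof (intro CollectI conjI allI)
  show "bij ext" using inj_ext surj_ext by (simp add: bij_def)
  fix u w show "(u, w) \<in> E \<longleftrightarrow> (ext u, ext w) \<in> E"
  proof
    assume "(ext u, ext w) \<in> E"
    then obtain v where "(u, v) \<in> E" "ext v = ext w" using ext_arc_onto by blast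
    then show "(u, w) \<in> E" using inj_ext by (metis injD)
  qed (use ext_arc in blast)
qed

lemma ext_image_VX: "ext ` VX = VX"
proof
  show "VX \<subseteq> ext ` VX"
  proof
    fix x assume "x \<in> VX"
    moreover obtain v where "ext v = x" using surj_ext by (metis surjD)
    ultimately show "x \<in> ext ` VX" using ext_VX_iff by auto
  qed
qed (use ext_VX_iff in auto)

lemma ext_in_U_c:
  assumes "\<And>v. v \<in> VX \<Longrightarrow> in_group_on M X (\<pi> v)" "\<And>v. v \<in> VY \<Longrightarrow> in_group_on N Y (\<pi> v)"
  shows "ext \<in> U_c E VX VY X Y c M N"
proof -
  have loc: "local_action E c ext v a = \<pi> v a" if "a \<in> colours v" for v a
    using local_action_colour[OF conjunct1[OF nbr[OF that]]] nbr[OF that] ext_arc by auto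
  have "in_group_on M X (local_action E c ext v)" if "v \<in> VX" for v
    using assms(1)[OF that] colours_VX[OF that] loc unfolding in_group_on_def by auto
  moreover have "in_group_on N Y (local_action E c ext v)" if "v \<in> VY" for v
    using assms(2)[OF that] colours_VY[OF that] loc unfolding in_group_on_def by auto
  ultimately show ?thesis using ext_tree_aut ext_image_VX unfolding U_c_def by blast
qed

end

section \<open>Primitive permutation groups\<close>

lemma perm_group_on_permutes: "perm_group_on \<Omega> G \<Longrightarrow> g \<in> G \<Longrightarrow> g permutes \<Omega>"
  unfolding perm_group_on_def by blast

lemma perm_group_on_id: "perm_group_on \<Omega> G \<Longrightarrow> id \<in> G"
  unfolding perm_group_on_def by blast

lemma perm_group_on_comp: "perm_group_on \<Omega> G \<Longrightarrow> g \<in> G \<Longrightarrow> h \<in> G \<Longrightarrow> g \<circ> h \<in> G"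
  unfolding perm_group_on_def by blast

lemma perm_group_on_inv: "perm_group_on \<Omega> G \<Longrightarrow> g \<in> G \<Longrightarrow> inv g \<in> G"
  unfolding perm_group_on_def by blast

lemma perm_group_on_mem: "perm_group_on \<Omega> G \<Longrightarrow> g \<in> G \<Longrightarrow> a \<in> \<Omega> \<Longrightarrow> g a \<in> \<Omega>"
  by (metis perm_group_on_permutes permutes_in_image)

lemma perm_group_on_fixes: "perm_group_on \<Omega> G \<Longrightarrow> g \<in> G \<Longrightarrow> a \<notin> \<Omega> \<Longrightarrow> g a = a"
  by (metis perm_group_on_permutes permutes_not_in)

lemma perm_group_on_inv_apply:
  assumes "perm_group_on \<Omega> G" "g \<in> G" shows "inv g (g a) = a" "g (inv g a) = a"
  using permutes_inverses[OF perm_group_on_permutes[OF assms]] by auto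

lemma regular_on_agree:
  assumes G: "perm_group_on \<Omega> G" and reg: "regular_on G \<Omega>" and gh: "g \<in> G" "h \<in> G"
    and a: "a \<in> \<Omega>" "g a = h a" and b: "b \<in> \<Omega>"
  shows "g b = h b"
proof -
  have "inv g \<circ> h \<in> G" using gh G perm_group_on_comp perm_group_on_inv by blast
  moreover have "(inv g \<circ> h) a = a" using a perm_group_on_inv_apply[OF G gh(1)] by (metis comp_apply)
  ultimately have "(inv g \<circ> h) b = b" using reg a b unfolding regular_on_def by blast
  then show ?thesis using perm_group_on_inv_apply[OF G gh(1)] by (metis comp_apply)
qed

lemma preserves_relD: "preserves_rel G R \<Longrightarrow> g \<in> G \<Longrightarrow> (x, y) \<in> R \<Longrightarrow> (g x, g y) \<in> R"
  unfolding preserves_rel_def by blast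

lemma primitive_on_block: "primitive_on G \<Omega> \<Longrightarrow> equiv \<Omega> R \<Longrightarrow> preserves_rel G R \<Longrightarrow> R = Id_on \<Omega> \<or> R = \<Omega> \<times> \<Omega>"
  unfolding primitive_on_def by blast

text \<open>The fibres of a G-equivariant map form a block system.\<close>
lemma primitive_equivariant_inj_or_const:
  assumes G: "perm_group_on \<Omega> G" and prim: "primitive_on G \<Omega>"
    and equivariant: "\<And>g z. g \<in> G \<Longrightarrow> z \<in> \<Omega> \<Longrightarrow> s (g z) = g (s z)"
  shows "inj_on s \<Omega> \<or> (\<forall>z\<in>\<Omega>. \<forall>z'\<in>\<Omega>. s z = s z')"
proof -
  let ?K = "{(z, z'). z \<in> \<Omega> \<and> z' \<in> \<Omega> \<and> s z = s z'}"
  have "equiv \<Omega> ?K" by (rule equivI) (auto simp: refl_on_def sym_def trans_def)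
  moreover have "preserves_rel G ?K"
    unfolding preserves_rel_def using equivariant perm_group_on_mem[OF G] by auto
  ultimately have "?K = Id_on \<Omega> \<or> ?K = \<Omega> \<times> \<Omega>" using primitive_on_block[OF prim] by blast
  then show ?thesis unfolding inj_on_def by auto
qed

lemma primitive_stabiliser_subset_sym:
  assumes G: "perm_group_on \<Omega> G" and prim: "primitive_on G \<Omega>"
    and ab: "a \<in> \<Omega>" "b \<in> \<Omega>" "a \<noteq> b" and sub: "\<And>g. g \<in> G \<Longrightarrow> g a = a \<Longrightarrow> g b = b"
    and g: "g \<in> G" "g b = b"
  shows "g a = a"
proof -
  have trans: "transitive_on G \<Omega>" using prim unfolding primitive_on_def by blast
  define mover where "mover z = (SOME m. m \<in> G \<and> m a = z)" for z
  have mover: "mover z \<in> G \<and> mover z a = z" if "z \<in> \<Omega>" for z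
  proof -
    have "\<exists>m. m \<in> G \<and> m a = z" using trans ab(1) that unfolding transitive_on_def by blast
    then show ?thesis unfolding mover_def by (rule someI_ex)
  qed
  define s where "s z = mover z b" for z
  text \<open>s is well defined: any two elements mapping a to z differ by an element of the
    stabiliser of a, which fixes b.\<close>
  have s_eq: "s z = m b" if m: "m \<in> G" "m a = z" and z: "z \<in> \<Omega>" for z m
  proof -
    have "inv m \<circ> mover z \<in> G" using G m mover[OF z] perm_group_on_comp perm_group_on_inv by blast
    moreover have "(inv m \<circ> mover z) a = a" using mover[OF z] m perm_group_on_inv_apply[OF G m(1)] by auto
    ultimately have "(inv m \<circ> mover z) b = b" by (rule sub)
    then have "m (inv m (mover z b)) = m b" by simp
    then show ?thesis unfolding s_def using perm_group_on_inv_apply(2)[OF G m(1)] by simp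
  qed
  have s_a: "s a = b" using s_eq[OF perm_group_on_id[OF G]] ab by simp
  have s_equivariant: "s (h z) = h (s z)" if h: "h \<in> G" and z: "z \<in> \<Omega>" for h z
  proof -
    have "h \<circ> mover z \<in> G" "(h \<circ> mover z) a = h z"
      using mover[OF z] perm_group_on_comp[OF G h] by auto
    then have "s (h z) = (h \<circ> mover z) b" using s_eq perm_group_on_mem[OF G h z] by blast
    then show ?thesis unfolding s_def by simp
  qed
  consider "inj_on s \<Omega>" | "\<forall>z\<in>\<Omega>. \<forall>z'\<in>\<Omega>. s z = s z'"
    using primitive_equivariant_inj_or_const[OF G prim s_equivariant] by blast
  then show ?thesis
  proof cases
    case 1
    have "s (g a) = s a" using s_equivariant[OF g(1) ab(1)] s_a g(2) by simp
    then show ?thesis using 1 perm_group_on_mem[OF G g(1) ab(1)] ab(1) unfolding inj_on_def by blast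
  next
    case 2
    obtain h where h: "h \<in> G" "h b = a" using trans ab unfolding transitive_on_def by blast
    have "s (h a) = h b" using s_equivariant[OF h(1) ab(1)] s_a by simp
    moreover have "s (h a) = s a" using 2 perm_group_on_mem[OF G h(1) ab(1)] ab(1) by blast
    ultimately have "a = b" using h(2) s_a by simp
    then show ?thesis using ab(3) by simp
  qed
qed

definition same_stabiliser :: "('a \<Rightarrow> 'a) set \<Rightarrow> 'a set \<Rightarrow> ('a \<times> 'a) set" where
  "same_stabiliser G \<Omega> = {(z, z'). z \<in> \<Omega> \<and> z' \<in> \<Omega> \<and> (\<forall>g\<in>G. g z = z \<longleftrightarrow> g z' = z')}"

lemma equiv_same_stabiliser: "equiv \<Omega> (same_stabiliser G \<Omega>)"
  unfolding same_stabiliser_def by (rule equivI) (auto simp: refl_on_def sym_def trans_def)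

lemma preserves_same_stabiliser:
  assumes G: "perm_group_on \<Omega> G" shows "preserves_rel G (same_stabiliser G \<Omega>)"
  unfolding preserves_rel_def
proof (intro ballI, clarify)
  fix n z z' assume n: "n \<in> G" and zz: "(z, z') \<in> same_stabiliser G \<Omega>"
  have "g (n z) = n z \<longleftrightarrow> g (n z') = n z'" if g: "g \<in> G" for g
  proof -
    have conj: "inv n \<circ> g \<circ> n \<in> G" using G n g perm_group_on_comp perm_group_on_inv by blast
    have "g (n w) = n w \<longleftrightarrow> (inv n \<circ> g \<circ> n) w = w" for w
      using perm_group_on_inv_apply[OF G n] by (metis comp_apply)
    then show ?thesis using zz conj unfolding same_stabiliser_def by auto
  qed
  then show "(n z, n z') \<in> same_stabiliser G \<Omega>"
    using zz perm_group_on_mem[OF G n] unfolding same_stabiliser_def by auto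
qed

lemma primitive_not_regular_stabiliser_moves:
  assumes G: "perm_group_on \<Omega> G" and prim: "primitive_on G \<Omega>" and nreg: "\<not> regular_on G \<Omega>"
    and ab: "a \<in> \<Omega>" "b \<in> \<Omega>" "a \<noteq> b"
  shows "\<exists>g\<in>G. g a = a \<and> g b \<noteq> b"
proof (rule ccontr)
  assume "\<not> ?thesis"
  then have "(a, b) \<in> same_stabiliser G \<Omega>"
    using primitive_stabiliser_subset_sym[OF G prim ab] ab unfolding same_stabiliser_def by blast
  then have "same_stabiliser G \<Omega> = \<Omega> \<times> \<Omega>"
    using primitive_on_block[OF prim equiv_same_stabiliser preserves_same_stabiliser[OF G]] ab(3) by auto
  then have "regular_on G \<Omega>"
    using prim unfolding regular_on_def primitive_on_def same_stabiliser_def by blast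
  then show False using nreg by simp
qed

section \<open>Transitivity of the box product\<close>

lemma tree_aut_arc: "g \<in> tree_aut E \<Longrightarrow> (u, w) \<in> E \<Longrightarrow> (g u, g w) \<in> E"
  unfolding tree_aut_def by blast

locale box_setting = coloured_tree E VX VY X Y c
  for E :: "('v \<times> 'v) set" and VX VY :: "'v set" and X Y :: "'a set" and c :: "'v \<times> 'v \<Rightarrow> 'a" +
  fixes M N :: "('a \<Rightarrow> 'a) set"
  assumes disjoint: "X \<inter> Y = {}" and perm_M: "perm_group_on X M" and perm_N: "perm_group_on Y N"
begin

abbreviation U :: "('v \<Rightarrow> 'v) set" where
  "U \<equiv> U_c E VX VY X Y c M N"

lemma M_fixes_Y: "m \<in> M \<Longrightarrow> a \<in> Y \<Longrightarrow> m a = a"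
  using perm_group_on_fixes[OF perm_M] disjoint by blast

lemma N_fixes_X: "n \<in> N \<Longrightarrow> a \<in> X \<Longrightarrow> n a = a"
  using perm_group_on_fixes[OF perm_N] disjoint by blast

lemma U_tree_aut: "g \<in> U \<Longrightarrow> g \<in> tree_aut E"
  unfolding U_c_def by blast

lemma U_VX_iff: assumes "g \<in> U" shows "g v \<in> VX \<longleftrightarrow> v \<in> VX"
proof -
  have "g ` VX = VX" "inj g" using assms unfolding U_c_def tree_aut_def bij_def by auto
  then show ?thesis by (metis inj_image_mem_iff)
qed

lemma U_VY_iff: "g \<in> U \<Longrightarrow> g v \<in> VY \<longleftrightarrow> v \<in> VY"
  using U_VX_iff VY_iff by blast

lemma local_action_colour_in:
  assumes "g \<in> tree_aut E" "(x, w) \<in> E"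
  shows "local_action E c g x (colour_in w) = colour_in (g w)"
  using local_action_colour[OF assms(2)] colour_in assms tree_aut_arc by metis

lemma U_local_VX:
  assumes g: "g \<in> U" and x: "x \<in> VX"
  shows "\<exists>m\<in>M. \<forall>w. (x, w) \<in> E \<longrightarrow> colour_in (g w) = m (colour_in w)"
proof -
  obtain m where "m \<in> M" "\<forall>a\<in>X. m a = local_action E c g x a"
    using g x unfolding U_c_def in_group_on_def by auto
  moreover have "colour_in w \<in> X" if "(x, w) \<in> E" for w
    using colour_in_VY arc_from_VX x that by blast
  ultimately show ?thesis using local_action_colour_in[OF U_tree_aut[OF g]] by metis
qed

lemma U_local_VY:
  assumes g: "g \<in> U" and y: "y \<in> VY"
  shows "\<exists>n\<in>N. \<forall>w. (y, w) \<in> E \<longrightarrow> colour_in (g w) = n (colour_in w)"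
proof -
  obtain n where "n \<in> N" "\<forall>a\<in>Y. n a = local_action E c g y a"
    using g y unfolding U_c_def in_group_on_def by auto
  moreover have "colour_in w \<in> Y" if "(y, w) \<in> E" for w
    using colour_in_VX arc_from_VY y that by blast
  ultimately show ?thesis using local_action_colour_in[OF U_tree_aut[OF g]] by metis
qed

lemma ex_uniform_aut:
  assumes \<sigma>: "\<sigma> \<in> M" and \<tau>: "\<tau> \<in> N" and rr': "r \<in> VX \<longleftrightarrow> r' \<in> VX"
    and root: "\<sigma> (\<tau> (colour_in r)) = colour_in r'"
  shows "\<exists>g\<in>U. g r = r' \<and>
    (\<forall>u v. (u, v) \<in> E \<longrightarrow> (g u, g v) \<in> E \<and> c (g u, g v) = \<sigma> (\<tau> (c (u, v))))"
proof -
  have "bij_betw \<tau> X X" using N_fixes_X[OF \<tau>] by (simp add: bij_betw_def inj_on_def image_def)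
  then have bX: "bij_betw (\<sigma> \<circ> \<tau>) X X"
    using permutes_imp_bij[OF perm_group_on_permutes[OF perm_M \<sigma>]] bij_betw_trans by blast
  have "bij_betw \<sigma> Y Y" using M_fixes_Y[OF \<sigma>] by (simp add: bij_betw_def inj_on_def image_def)
  then have bY: "bij_betw (\<sigma> \<circ> \<tau>) Y Y"
    using permutes_imp_bij[OF perm_group_on_permutes[OF perm_N \<tau>]] bij_betw_trans by blast
  interpret G: local_extension E VX VY X Y c r r' "\<lambda>v. \<sigma> \<circ> \<tau>"
    by unfold_locales (use rr' bX bY root in \<open>auto simp: colours_def\<close>)
  have "G.ext \<in> U"
  proof (rule G.ext_in_U_c)
    show "in_group_on M X (\<sigma> \<circ> \<tau>)" using \<sigma> N_fixes_X[OF \<tau>] unfolding in_group_on_def by auto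
    show "in_group_on N Y (\<sigma> \<circ> \<tau>)"
      using \<tau> M_fixes_Y[OF \<sigma>] perm_group_on_mem[OF perm_N \<tau>] unfolding in_group_on_def by auto
  qed
  then show ?thesis using G.ext_root G.ext_arc by auto
qed

definition branch_action :: "'v \<Rightarrow> 'v \<Rightarrow> ('a \<Rightarrow> 'a) \<Rightarrow> 'v \<Rightarrow> 'a \<Rightarrow> 'a" where
  "branch_action x u \<sigma> v = (if v \<noteq> x \<and> toward x v = u then id else \<sigma>)"

lemma local_extension_branch_action:
  assumes x: "x \<in> VX" and \<sigma>: "\<sigma> \<in> M" and fix_u: "\<sigma> (colour_in u) = colour_in u"
  shows "local_extension E VX VY X Y c x x (branch_action x u \<sigma>)"
proof unfold_locales
  have bX: "bij_betw \<sigma> X X" using permutes_imp_bij[OF perm_group_on_permutes[OF perm_M \<sigma>]] .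
  have bY: "bij_betw \<sigma> Y Y" using M_fixes_Y[OF \<sigma>] by (simp add: bij_betw_def inj_on_def image_def)
  show "bij_betw (branch_action x u \<sigma> v) (colours v) (colours v)" for v
    using bX bY unfolding colours_def branch_action_def by auto
  show "branch_action x u \<sigma> v (colour_in x) = colour_in x" for v
    using M_fixes_Y[OF \<sigma>] colour_in_VX[OF x] unfolding branch_action_def by auto
next
  fix v assume v: "v \<noteq> x" "parent x v \<noteq> x"
  let ?p = "parent x v"
  have tv: "toward x v = toward x ?p" using toward_parent v by auto
  show "branch_action x u \<sigma> v (colour_in ?p) = branch_action x u \<sigma> (parent x ?p) (colour_in ?p)"
  proof (cases "parent x ?p = x")
    case True
    then have "toward x ?p = ?p" using toward_parent_root v by auto
    then show ?thesis using True tv fix_u unfolding branch_action_def by auto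
  next
    case False
    then have "toward x ?p = toward x (parent x ?p)" using toward_parent v by auto
    then show ?thesis using tv v False unfolding branch_action_def by auto
  qed
qed simp

lemma ex_aut_fixing_branch:
  assumes x: "x \<in> VX" and u: "(x, u) \<in> E" and \<sigma>: "\<sigma> \<in> M" and fix_u: "\<sigma> (colour_in u) = colour_in u"
  shows "\<exists>g\<in>U. g x = x \<and> (\<forall>v. toward x v = u \<longrightarrow> g v = v) \<and>
           (\<forall>w. (x, w) \<in> E \<longrightarrow> (x, g w) \<in> E \<and> c (x, g w) = \<sigma> (c (x, w)))"
proof -
  let ?\<pi> = "branch_action x u \<sigma>"
  interpret G: local_extension E VX VY X Y c x x ?\<pi>
    using local_extension_branch_action[OF x \<sigma> fix_u] .
  have "G.ext \<in> U"
  proof (rule G.ext_in_U_c)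
    show "in_group_on M X (?\<pi> v)" for v
      using \<sigma> perm_group_on_id[OF perm_M] unfolding branch_action_def in_group_on_def
      by (cases "v \<noteq> x \<and> toward x v = u") (auto intro: bexI[of _ id])
    show "in_group_on N Y (?\<pi> v)" for v
      using perm_group_on_id[OF perm_N] M_fixes_Y[OF \<sigma>] unfolding branch_action_def in_group_on_def
      by (intro bexI[of _ id]) auto
  qed
  moreover have "G.ext v = v" if "toward x v = u" for v
    using that
  proof (induction v rule: depth_induct[where r = x])
    case (less v)
    show ?case
    proof (cases "v = x")
      case True then show ?thesis using G.ext_root by simp
    next
      case vx: False
      let ?p = "parent x v"
      have ep: "(?p, v) \<in> E" using parent_arc[OF vx] .
      show ?thesis
      proof (cases "?p = x")
        case True
        then have "v = u" using toward_parent_root vx less.prems by auto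
        then have "?\<pi> ?p (c (?p, v)) = c (?p, v)"
          using True fix_u colour_in u unfolding branch_action_def by auto
        then show ?thesis using G.ext_parent[OF vx] True G.ext_root nbr_colour[OF ep] by simp
      next
        case False
        then have "toward x ?p = u" using toward_parent vx less.prems by auto
        then have "G.ext ?p = ?p" using less.IH length_geodesic_parent[OF vx] by blast
        moreover have "?\<pi> ?p = id" using False \<open>toward x ?p = u\<close> unfolding branch_action_def by auto
        ultimately show ?thesis using G.ext_parent[OF vx] nbr_colour[OF ep] by simp
      qed
    qed
  qed
  moreover have "(x, G.ext w) \<in> E \<and> c (x, G.ext w) = \<sigma> (c (x, w))" if "(x, w) \<in> E" for w
    using G.ext_arc[OF that] G.ext_root unfolding branch_action_def by auto
  ultimately show ?thesis using G.ext_root by blast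
qed

lemma transitive_box_product_iff:
  "transitive_on (box_product E VX VY X Y c M N) VY \<longleftrightarrow> (\<forall>y\<in>VY. \<forall>y'\<in>VY. \<exists>g\<in>U. g y = y')"
  unfolding transitive_on_def box_product_def by auto

lemma preserves_box_product_iff:
  "R \<subseteq> VY \<times> VY \<Longrightarrow> preserves_rel (box_product E VX VY X Y c M N) R \<longleftrightarrow> preserves_rel U R"
  unfolding preserves_rel_def box_product_def by fastforce

lemma transitive_box_product: "transitive_on (box_product E VX VY X Y c M N) VY \<longleftrightarrow> transitive_on M X"
  unfolding transitive_box_product_iff
proof
  assume h: "\<forall>y\<in>VY. \<forall>y'\<in>VY. \<exists>g\<in>U. g y = y'"
  show "transitive_on M X" unfolding transitive_on_def
  proof (intro ballI)
    fix a b assume ab: "a \<in> X" "b \<in> X"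
    obtain x where x: "x \<in> VX" using ex_VX by blast
    obtain g where g: "g \<in> U" "g (nbr x a) = nbr x b" using h nbr_VX[OF x] ab by meson
    obtain m where "m \<in> M" "\<forall>w. (x, w) \<in> E \<longrightarrow> colour_in (g w) = m (colour_in w)"
      using U_local_VX[OF g(1) x] by blast
    then show "\<exists>m\<in>M. m a = b" using g nbr_VX[OF x] ab by metis
  qed
next
  assume h: "transitive_on M X"
  show "\<forall>y\<in>VY. \<forall>y'\<in>VY. \<exists>g\<in>U. g y = y'"
  proof (intro ballI)
    fix y y' assume y: "y \<in> VY" "y' \<in> VY"
    obtain \<sigma> where "\<sigma> \<in> M" "\<sigma> (id (colour_in y)) = colour_in y'"
      using h colour_in_VY y unfolding transitive_on_def by fastforce
    then show "\<exists>g\<in>U. g y = y'"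
      using ex_uniform_aut[OF _ perm_group_on_id[OF perm_N]] y VY_iff by blast
  qed
qed

section \<open>Primitivity of the box product\<close>

lemma box_primitive_block:
  assumes "primitive_on (box_product E VX VY X Y c M N) VY"
    and "equiv VY R" and "preserves_rel U R"
  shows "R = Id_on VY \<or> R = VY \<times> VY"
proof -
  have "R \<subseteq> VY \<times> VY" using assms(2) unfolding equiv_def refl_on_def by auto
  then have "preserves_rel (box_product E VX VY X Y c M N) R"
    using preserves_box_product_iff assms(3) by blast
  then show ?thesis using primitive_on_block assms(1,2) by blast
qed

definition glued_rel :: "('v \<Rightarrow> ('v \<times> 'v) set) \<Rightarrow> ('v \<times> 'v) set" where
  "glued_rel T = {(y, y'). y \<in> VY \<and> y' \<in> VY \<and>
     (\<forall>x\<in>set (geodesic y y'). x \<in> VX \<longrightarrow> (toward x y, toward x y') \<in> T x)}"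

lemma glued_rel_common_nbr:
  assumes "x \<in> VX" "(x, y) \<in> E" "(x, y') \<in> E" "y \<noteq> y'"
  shows "(y, y') \<in> glued_rel T \<longleftrightarrow> (y, y') \<in> T x"
proof -
  have "geodesic y y' = [y, x, y']"
    by (rule geodesic_unique) (use assms arc_sym in \<open>auto simp: reduced_walk_def nth_Cons split: nat.splits\<close>)
  moreover have "y \<in> VY" "y' \<in> VY" using arc_from_VX assms by auto
  moreover have "toward x y = y" "toward x y' = y'" using toward_of_arc assms by auto
  ultimately show ?thesis using assms(1) VY_iff unfolding glued_rel_def by auto
qed

lemma equiv_glued_rel:
  assumes refl: "\<And>x y. x \<in> VX \<Longrightarrow> (x, y) \<in> E \<Longrightarrow> (y, y) \<in> T x"
    and sym: "\<And>x y y'. (y, y') \<in> T x \<Longrightarrow> (y', y) \<in> T x"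
    and trans: "\<And>x y y' y''. (y, y') \<in> T x \<Longrightarrow> (y', y'') \<in> T x \<Longrightarrow> (y, y'') \<in> T x"
  shows "equiv VY (glued_rel T)"
proof (rule equivI)
  show "refl_on VY (glued_rel T)" unfolding refl_on_def glued_rel_def using geodesic_self VY_iff by auto
  have "set (geodesic y' y) = set (geodesic y y')" for y y' using geodesic_rev[of y' y] by simp
  then show "sym (glued_rel T)" unfolding sym_def glued_rel_def using sym by auto
  show "trans (glued_rel T)" unfolding trans_def
  proof (intro allI impI)
    fix y1 y2 y3 assume h: "(y1, y2) \<in> glued_rel T" "(y2, y3) \<in> glued_rel T"
    then have y: "y1 \<in> VY" "y2 \<in> VY" "y3 \<in> VY" unfolding glued_rel_def by auto
    have "(toward x y1, toward x y3) \<in> T x" if x: "x \<in> set (geodesic y1 y3)" "x \<in> VX" for x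
    proof -
      have ne: "x \<noteq> y1" "x \<noteq> y2" "x \<noteq> y3" using x y VY_iff by auto
      consider "x \<in> set (geodesic y1 y2)" "x \<in> set (geodesic y2 y3)"
        | "x \<in> set (geodesic y1 y2)" "x \<notin> set (geodesic y2 y3)"
        | "x \<notin> set (geodesic y1 y2)" "x \<in> set (geodesic y2 y3)"
        using set_geodesic_triangle x by blast
      then show ?thesis
      proof cases
        case 1 then show ?thesis using h x trans unfolding glued_rel_def by blast
      next
        case 2
        then have "toward x y2 = toward x y3" using toward_eq_if_not_on_geodesic ne by auto
        then show ?thesis using h 2 x unfolding glued_rel_def by auto
      next
        case 3
        then have "toward x y1 = toward x y2" using toward_eq_if_not_on_geodesic ne by auto
        then show ?thesis using h 3 x unfolding glued_rel_def by auto
      qed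
    qed
    then show "(y1, y3) \<in> glued_rel T" unfolding glued_rel_def using y by auto
  qed
qed (auto simp: glued_rel_def)

lemma glued_rel_invariant:
  assumes inv: "\<And>g x y y'. g \<in> U \<Longrightarrow> x \<in> VX \<Longrightarrow> (x, y) \<in> E \<Longrightarrow> (x, y') \<in> E \<Longrightarrow>
      (y, y') \<in> T x \<Longrightarrow> (g y, g y') \<in> T (g x)"
  shows "preserves_rel U (glued_rel T)"
  unfolding preserves_rel_def
proof (intro ballI, clarify)
  fix g y y' assume g: "g \<in> U" and yy': "(y, y') \<in> glued_rel T"
  have y: "y \<in> VY" "y' \<in> VY" using yy' unfolding glued_rel_def by auto
  have "(toward x (g y), toward x (g y')) \<in> T x" if x: "x \<in> set (geodesic (g y) (g y'))" "x \<in> VX" for x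
  proof -
    obtain x0 where x0: "x0 \<in> set (geodesic y y')" "x = g x0"
      using x geodesic_aut[OF U_tree_aut[OF g]] by auto
    have x0X: "x0 \<in> VX" using x0 x U_VX_iff[OF g] by auto
    have ne: "x0 \<noteq> y" "x0 \<noteq> y'" using x0X y VY_iff by auto
    have "(toward x0 y, toward x0 y') \<in> T x0" using yy' x0 x0X unfolding glued_rel_def by auto
    then have "(g (toward x0 y), g (toward x0 y')) \<in> T (g x0)"
      using inv[OF g x0X] toward_arc ne by auto
    then show ?thesis using x0 toward_aut[OF U_tree_aut[OF g]] ne by simp
  qed
  then show "(g y, g y') \<in> glued_rel T" unfolding glued_rel_def using y U_VY_iff[OF g] by auto
qed

text \<open>Gluing only ever yields the identity or the universal relation, so under a
  primitive box product T x relates either no or all pairs of siblings.\<close>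
lemma glued_rel_siblings:
  assumes prim: "primitive_on (box_product E VX VY X Y c M N) VY"
    and equiv: "equiv VY (glued_rel T)" and inv: "preserves_rel U (glued_rel T)"
    and x: "x \<in> VX" "(x, y) \<in> E" "(x, y') \<in> E" "y \<noteq> y'" "(y, y') \<in> T x"
    and x': "x' \<in> VX" "(x', z) \<in> E" "(x', z') \<in> E" "z \<noteq> z'"
  shows "(z, z') \<in> T x'"
proof -
  have "(y, y') \<in> glued_rel T" using glued_rel_common_nbr[OF x(1-4)] x(5) by blast
  then have "glued_rel T = VY \<times> VY" using box_primitive_block[OF prim equiv inv] x(4) by auto
  moreover have "z \<in> VY" "z' \<in> VY" using arc_from_VX x' by auto
  ultimately show ?thesis using glued_rel_common_nbr[OF x'] by auto
qed

lemma transitive_N_if_primitive: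
  assumes prim: "primitive_on (box_product E VX VY X Y c M N) VY"
  shows "transitive_on N Y"
proof (rule ccontr)
  assume "\<not> transitive_on N Y"
  then obtain a b where ab: "a \<in> Y" "b \<in> Y" "\<forall>n\<in>N. n a \<noteq> b" unfolding transitive_on_def by blast
  define orbit where "orbit = (\<lambda>n. n a) ` N"
  define T where "T x = {(y, y'). (x, y) \<in> E \<and> (x, y') \<in> E \<and> (colour_in x \<in> orbit \<or> y = y')}" for x
  have equiv: "equiv VY (glued_rel T)" by (rule equiv_glued_rel) (auto simp: T_def)
  have inv: "preserves_rel U (glued_rel T)"
  proof (rule glued_rel_invariant)
    fix g x y y' assume g: "g \<in> U" and x: "x \<in> VX" and e: "(x, y) \<in> E" "(x, y') \<in> E"
      and yy': "(y, y') \<in> T x"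
    have "colour_in (g x) \<in> orbit" if k: "colour_in x \<in> orbit"
    proof -
      obtain n where n: "n \<in> N" "\<forall>w. (y, w) \<in> E \<longrightarrow> colour_in (g w) = n (colour_in w)"
        using U_local_VY[OF g arc_from_VX[OF x e(1)]] by blast
      moreover obtain n0 where "n0 \<in> N" "colour_in x = n0 a" using k unfolding orbit_def by auto
      ultimately have "n \<circ> n0 \<in> N" "colour_in (g x) = (n \<circ> n0) a"
        using perm_group_on_comp[OF perm_N] arc_sym e by auto
      then show ?thesis unfolding orbit_def by blast
    qed
    then show "(g y, g y') \<in> T (g x)"
      using yy' e tree_aut_arc[OF U_tree_aut[OF g]] unfolding T_def by auto
  qed
  obtain y0 where y0: "y0 \<in> VY" using ex_VY by blast
  have xa: "nbr y0 a \<in> VX" "colour_in (nbr y0 a) = a" using nbr_VY[OF y0 ab(1)] by auto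
  have xb: "nbr y0 b \<in> VX" "colour_in (nbr y0 b) = b" using nbr_VY[OF y0 ab(2)] by auto
  obtain y y' where yy': "(nbr y0 a, y) \<in> E" "(nbr y0 a, y') \<in> E" "y \<noteq> y'"
    using two_arcs_from_VX[OF xa(1)] by blast
  obtain z z' where zz': "(nbr y0 b, z) \<in> E" "(nbr y0 b, z') \<in> E" "z \<noteq> z'"
    using two_arcs_from_VX[OF xb(1)] by blast
  have "a \<in> orbit" unfolding orbit_def using perm_group_on_id[OF perm_N] by (metis id_apply image_eqI)
  then have "(y, y') \<in> T (nbr y0 a)" using yy' xa unfolding T_def by auto
  then have "(z, z') \<in> T (nbr y0 b)" using glued_rel_siblings[OF prim equiv inv xa(1) yy' _ xb(1) zz'] by blast
  moreover have "b \<notin> orbit" unfolding orbit_def using ab by auto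
  ultimately show False using xb zz'(3) unfolding T_def by auto
qed

lemma block_M_if_primitive:
  assumes prim: "primitive_on (box_product E VX VY X Y c M N) VY"
    and S: "equiv X S" "preserves_rel M S"
  shows "S = Id_on X \<or> S = X \<times> X"
proof (rule ccontr)
  assume ne: "\<not> (S = Id_on X \<or> S = X \<times> X)"
  have SX: "S \<subseteq> X \<times> X" and refl: "\<And>a. a \<in> X \<Longrightarrow> (a, a) \<in> S"
    using S(1) unfolding equiv_def refl_on_def by blast+
  define T where "T x = {(y, y'). (x, y) \<in> E \<and> (x, y') \<in> E \<and> (colour_in y, colour_in y') \<in> S}" for x
  have equiv: "equiv VY (glued_rel T)"
  proof (rule equiv_glued_rel)
    fix x y assume "x \<in> VX" "(x, y) \<in> E"
    then show "(y, y) \<in> T x" unfolding T_def using refl colour_in_VY arc_from_VX by auto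
  next
    show "(y', y) \<in> T x" if "(y, y') \<in> T x" for x y y'
      using that S(1) unfolding T_def equiv_def sym_def by blast
    show "(y, y'') \<in> T x" if "(y, y') \<in> T x" "(y', y'') \<in> T x" for x y y' y''
      using that S(1) unfolding T_def equiv_def trans_def by blast
  qed
  have inv: "preserves_rel U (glued_rel T)"
  proof (rule glued_rel_invariant)
    fix g x y y' assume g: "g \<in> U" and x: "x \<in> VX" and e: "(x, y) \<in> E" "(x, y') \<in> E"
      and yy': "(y, y') \<in> T x"
    obtain m where m: "m \<in> M" "\<forall>w. (x, w) \<in> E \<longrightarrow> colour_in (g w) = m (colour_in w)"
      using U_local_VX[OF g x] by blast
    have "(m (colour_in y), m (colour_in y')) \<in> S"
      using S(2) m(1) yy' unfolding preserves_rel_def T_def by auto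
    then show "(g y, g y') \<in> T (g x)" using m e tree_aut_arc[OF U_tree_aut[OF g]] unfolding T_def by auto
  qed
  obtain x where x: "x \<in> VX" using ex_VX by blast
  have siblings: "(x, nbr x a) \<in> E" "(x, nbr x b) \<in> E" "nbr x a \<noteq> nbr x b"
      "(nbr x a, nbr x b) \<in> T x \<longleftrightarrow> (a, b) \<in> S"
    if ab: "a \<in> X" "b \<in> X" "a \<noteq> b" for a b
  proof -
    have "(x, nbr x a) \<in> E" "colour_in (nbr x a) = a" "(x, nbr x b) \<in> E" "colour_in (nbr x b) = b"
      using nbr_VX[OF x ab(1)] nbr_VX[OF x ab(2)] by auto
    then show "(x, nbr x a) \<in> E" "(x, nbr x b) \<in> E" "nbr x a \<noteq> nbr x b"
      "(nbr x a, nbr x b) \<in> T x \<longleftrightarrow> (a, b) \<in> S"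
      using ab(3) unfolding T_def by auto
  qed
  obtain a b where ab: "(a, b) \<in> S" "a \<noteq> b" using ne SX refl unfolding Id_on_def by auto
  then have "a \<in> X" "b \<in> X" using SX by auto
  note ab_sib = siblings[OF this ab(2)]
  obtain a' b' where ab': "a' \<in> X" "b' \<in> X" "(a', b') \<notin> S" using ne SX by auto
  then have "a' \<noteq> b'" using refl by auto
  note ab'_sib = siblings[OF ab'(1,2) this]
  have "(nbr x a', nbr x b') \<in> T x"
    using glued_rel_siblings[OF prim equiv inv x ab_sib(1-3) _ x ab'_sib(1-3)] ab_sib(4) ab(1) by blast
  then show False using ab'_sib(4) ab'(3) by blast
qed

text \<open>Local actions at two vertices of VX with a common neighbour p agree on the colour
  entering p, so by regularity they coincide.\<close>
lemma U_local_VX_regular: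
  assumes reg: "regular_on M X" and g: "g \<in> U" and x0: "x0 \<in> VX" and m0: "m0 \<in> M"
    and at_x0: "\<forall>w. (x0, w) \<in> E \<longrightarrow> colour_in (g w) = m0 (colour_in w)"
  shows "x \<in> VX \<Longrightarrow> (x, w) \<in> E \<Longrightarrow> colour_in (g w) = m0 (colour_in w)"
proof (induction x arbitrary: w rule: depth_induct[where r = x0])
  case (less x)
  show ?case
  proof (cases "x = x0")
    case True then show ?thesis using at_x0 less.prems by auto
  next
    case False
    let ?p = "parent x0 x"
    have ep: "(?p, x) \<in> E" using parent_arc[OF False] .
    have pY: "?p \<in> VY" using arc_from_VX[OF less.prems(1) arc_sym[OF ep]] .
    then have px0: "?p \<noteq> x0" using x0 unfolding VY_iff by auto
    let ?pp = "parent x0 ?p"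
    have epp: "(?pp, ?p) \<in> E" using parent_arc[OF px0] .
    have "length (geodesic x0 ?pp) < length (geodesic x0 x)"
      using length_geodesic_parent[OF px0] length_geodesic_parent[OF False] by (rule less_trans)
    moreover have "?pp \<in> VX" using arc_from_VY[OF pY arc_sym[OF epp]] .
    ultimately have IH: "colour_in (g ?p) = m0 (colour_in ?p)" using less.IH epp by blast
    obtain mx where mx: "mx \<in> M" "\<forall>w. (x, w) \<in> E \<longrightarrow> colour_in (g w) = mx (colour_in w)"
      using U_local_VX[OF g less.prems(1)] by blast
    have "mx (colour_in ?p) = m0 (colour_in ?p)" using mx(2) arc_sym[OF ep] IH by simp
    moreover have "colour_in ?p \<in> X" "colour_in w \<in> X"
      using colour_in_VY[OF pY] colour_in_VY[OF arc_from_VX[OF less.prems]] .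
    ultimately have "mx (colour_in w) = m0 (colour_in w)"
      using regular_on_agree[OF perm_M reg mx(1) m0] by blast
    then show ?thesis using mx less.prems by auto
  qed
qed

lemma U_colour_in_regular:
  assumes reg: "regular_on M X" and g: "g \<in> U"
  shows "\<exists>m\<in>M. \<forall>y\<in>VY. colour_in (g y) = m (colour_in y)"
proof -
  obtain x0 where x0: "x0 \<in> VX" using ex_VX by blast
  obtain m0 where m0: "m0 \<in> M" "\<forall>w. (x0, w) \<in> E \<longrightarrow> colour_in (g w) = m0 (colour_in w)"
    using U_local_VX[OF g x0] by blast
  have "colour_in (g y) = m0 (colour_in y)" if y: "y \<in> VY" for y
  proof -
    obtain w where "(w, y) \<in> E" using ex_arc_to by blast
    moreover from this have "w \<in> VX" using arc_from_VY[OF y arc_sym] by blast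
    ultimately show ?thesis using U_local_VX_regular[OF reg g x0 m0] by blast
  qed
  then show ?thesis using m0 by blast
qed

lemma not_regular_M_if_primitive:
  assumes prim: "primitive_on (box_product E VX VY X Y c M N) VY"
  shows "\<not> regular_on M X"
proof
  assume reg: "regular_on M X"
  define K where "K = {(y, y'). y \<in> VY \<and> y' \<in> VY \<and> colour_in y = colour_in y'}"
  have equiv: "equiv VY K" unfolding K_def by (rule equivI) (auto simp: refl_on_def sym_def trans_def)
  have "preserves_rel U K" unfolding preserves_rel_def
  proof (intro ballI, clarify)
    fix g y y' assume g: "g \<in> U" and yy': "(y, y') \<in> K"
    obtain m where "m \<in> M" "\<forall>y\<in>VY. colour_in (g y) = m (colour_in y)"
      using U_colour_in_regular[OF reg g] by blast
    then show "(g y, g y') \<in> K" using yy' U_VY_iff[OF g] unfolding K_def by auto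
  qed
  then have "K = Id_on VY \<or> K = VY \<times> VY" using box_primitive_block[OF prim equiv] by blast
  moreover
  text \<open>Along a path y, x, y1, x2, y2 choose colours so that y1 is entered with a colour
    different from that of y, and y2 with the same one.\<close>
  obtain y where y: "y \<in> VY" using ex_VY by blast
  obtain b1 where b1: "b1 \<in> Y" using two_Y by blast
  let ?x = "nbr y b1"
  have x: "(y, ?x) \<in> E" "?x \<in> VX" using nbr_VY[OF y b1] by auto
  obtain a where a: "a \<in> X" "a \<noteq> colour_in y" using two_X by blast
  let ?y1 = "nbr ?x a"
  have y1: "(?x, ?y1) \<in> E" "?y1 \<in> VY" "colour_in ?y1 = a" using nbr_VX[OF x(2) a(1)] by auto
  have "(y, ?y1) \<notin> K" using y1 a unfolding K_def by auto
  then have "K \<noteq> VY \<times> VY" using y y1 by auto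
  moreover have "K \<noteq> Id_on VY"
  proof -
    obtain b2 where b2: "b2 \<in> Y" "b2 \<noteq> colour_in ?x" using two_Y by blast
    let ?x2 = "nbr ?y1 b2"
    have x2: "(?y1, ?x2) \<in> E" "?x2 \<in> VX" "colour_in ?x2 = b2" using nbr_VY[OF y1(2) b2(1)] by auto
    have "?x \<noteq> ?x2" using x2 b2 by auto
    let ?y2 = "nbr ?x2 (colour_in y)"
    have y2: "(?x2, ?y2) \<in> E" "?y2 \<in> VY" "colour_in ?y2 = colour_in y"
      using nbr_VX[OF x2(2) colour_in_VY[OF y]] by auto
    have "?y2 \<noteq> y"
    proof
      assume "?y2 = y"
      moreover have "reduced_walk E [y, ?x, ?y1, ?x2]" unfolding reduced_walk_def
        using x(1) y1 x2(1) a \<open>?x \<noteq> ?x2\<close> by (auto simp: nth_Cons split: nat.splits)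
      then have "geodesic y ?x2 = [y, ?x, ?y1, ?x2]" using geodesic_unique by force
      ultimately show False using geodesic_arc arc_sym y2(1) by fastforce
    qed
    then show ?thesis using y y2 unfolding K_def by auto
  qed
  ultimately show False by blast
qed

lemma related_if_siblings_related:
  assumes R: "equiv VY R" and siblings: "\<And>x y y'. x \<in> VX \<Longrightarrow> (x, y) \<in> E \<Longrightarrow> (x, y') \<in> E \<Longrightarrow> (y, y') \<in> R"
  shows "R = VY \<times> VY"
proof -
  have refl: "\<And>y. y \<in> VY \<Longrightarrow> (y, y) \<in> R" and trans: "\<And>a b d. (a, b) \<in> R \<Longrightarrow> (b, d) \<in> R \<Longrightarrow> (a, d) \<in> R"
    and sub: "R \<subseteq> VY \<times> VY"
    using R unfolding equiv_def refl_on_def trans_def by blast+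
  have "(a, b) \<in> R" if ab: "a \<in> VY" "b \<in> VY" for a b
  proof -
    let ?W = "geodesic a b"
    have even_steps: "2 * i < length ?W \<longrightarrow> (a, ?W ! (2 * i)) \<in> R" for i
    proof (induction i)
      case 0 then show ?case using geodesic_nth_0 refl ab by simp
    next
      case (Suc i)
      show ?case
      proof
        assume l: "2 * Suc i < length ?W"
        have e1: "(?W ! (2 * i), ?W ! Suc (2 * i)) \<in> E" and e2: "(?W ! Suc (2 * i), ?W ! Suc (Suc (2 * i))) \<in> E"
          using geodesic_arcs l by simp_all
        have "?W ! Suc (2 * i) \<in> VX" using geodesic_nth_VX_iff[of "Suc (2 * i)" a b] l ab VY_iff by auto
        then have "(?W ! (2 * i), ?W ! Suc (Suc (2 * i))) \<in> R" using siblings arc_sym[OF e1] e2 by blast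
        then show "(a, ?W ! (2 * Suc i)) \<in> R" using Suc l trans by simp
      qed
    qed
    have "?W ! (length ?W - 1) \<notin> VX" using geodesic_nth_last ab VY_iff by simp
    then have "even (length ?W - 1)"
      using geodesic_nth_VX_iff[of "length ?W - 1" a b] geodesic_ne ab VY_iff by auto
    then obtain i where "length ?W - 1 = 2 * i" by (metis dvd_def)
    moreover have "length ?W - 1 < length ?W" using geodesic_ne by simp
    ultimately show ?thesis using even_steps[of i] geodesic_nth_last by metis
  qed
  then show ?thesis using sub by auto
qed

text \<open>Let x be the last vertex of VX on the geodesic from y to y', with u the step from x
  towards y. An automorphism fixing the branch at x through u (hence y) and acting at x by
  an element of M fixing the colour of u but moving that of y' gives a sibling of y' that
  is related to y, hence to y'.\<close>
lemma ex_related_siblings: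
  assumes prim: "primitive_on M X" and nreg: "\<not> regular_on M X"
    and R: "equiv VY R" and inv: "preserves_rel U R"
    and yy': "(y, y') \<in> R" "y \<noteq> y'"
  shows "\<exists>x z z'. x \<in> VX \<and> (x, z) \<in> E \<and> (x, z') \<in> E \<and> z \<noteq> z' \<and> (z, z') \<in> R"
proof -
  have sym: "\<And>a b. (a, b) \<in> R \<Longrightarrow> (b, a) \<in> R" and trans: "\<And>a b d. (a, b) \<in> R \<Longrightarrow> (b, d) \<in> R \<Longrightarrow> (a, d) \<in> R"
    and y: "y \<in> VY" "y' \<in> VY"
    using R yy'(1) unfolding equiv_def refl_on_def sym_def trans_def by blast+
  let ?W = "geodesic y y'" let ?n = "length ?W"
  have n2: "2 \<le> ?n" using length_geodesic_ge_2 yy' by auto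
  have "?W ! (?n - 1) \<notin> VX" using geodesic_nth_last y VY_iff by simp
  then have "even (?n - 1)" using geodesic_nth_VX_iff[of "?n - 1" y y'] n2 y VY_iff by auto
  then have n3: "3 \<le> ?n" using n2 by presburger
  let ?x = "?W ! (?n - 2)" and ?u = "?W ! (?n - 3)"
  have "(?x, ?W ! Suc (?n - 2)) \<in> E" using geodesic_arcs[of "?n - 2"] n3 by simp
  moreover have "Suc (?n - 2) = ?n - 1" using n3 by arith
  ultimately have xy': "(?x, y') \<in> E" using geodesic_nth_last[of y y'] by simp
  have "Suc (?n - 3) = ?n - 2" "Suc (Suc (?n - 3)) = ?n - 1" using n3 by arith+
  then have ux: "(?u, ?x) \<in> E" and "?u \<noteq> y'"
    using geodesic_arcs[of "?n - 3" y y'] geodesic_no_backtrack[of "?n - 3" y y']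
      geodesic_nth_last[of y y'] n3 by auto
  have x: "?x \<in> VX" using xy' y arc_VX_iff VY_iff by blast
  have xu: "(?x, ?u) \<in> E" using arc_sym[OF ux] .
  have "colour_in ?u \<in> X" "colour_in y' \<in> X" "colour_in ?u \<noteq> colour_in y'"
    using colour_in_VY arc_from_VX[OF x xu] y colour_in_inj[OF xu xy'] \<open>?u \<noteq> y'\<close> by auto
  then obtain \<sigma> where \<sigma>: "\<sigma> \<in> M" "\<sigma> (colour_in ?u) = colour_in ?u" "\<sigma> (colour_in y') \<noteq> colour_in y'"
    using primitive_not_regular_stabiliser_moves[OF perm_M prim nreg] by blast
  obtain g where g: "g \<in> U" "\<forall>v. toward ?x v = ?u \<longrightarrow> g v = v"
    "\<forall>w. (?x, w) \<in> E \<longrightarrow> (?x, g w) \<in> E \<and> c (?x, g w) = \<sigma> (c (?x, w))"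
    using ex_aut_fixing_branch[OF x xu \<sigma>(1,2)] by blast
  have "?n - 1 - 1 = ?n - 2" by arith
  then have "take (?n - 1) ?W = geodesic y ?x" using take_geodesic[of "?n - 1" y y'] n3 by simp
  then have "geodesic ?x y = rev (take (?n - 1) ?W)" using geodesic_rev[of ?x y] by simp
  then have "toward ?x y = ?u" unfolding toward_def using n3 by (simp add: rev_nth numeral_3_eq_3)
  then have "g y = y" using g(2) by blast
  then have "(y', g y') \<in> R" using preserves_relD[OF inv g(1) yy'(1)] sym trans yy'(1) by metis
  moreover have "(?x, g y') \<in> E" "c (?x, g y') = \<sigma> (c (?x, y'))" using g(3) xy' by auto
  moreover have "g y' \<noteq> y'" using calculation(3) \<sigma>(3) colour_in[OF xy'] by auto
  ultimately show ?thesis using x xy' by (intro exI[of _ ?x] exI[of _ y'] exI[of _ "g y'"]) auto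
qed

definition colour_rel :: "('v \<times> 'v) set \<Rightarrow> ('a \<times> 'a) set" where
  "colour_rel R = {(a, b). a \<in> X \<and> b \<in> X \<and> (\<forall>x\<in>VX. (nbr x a, nbr x b) \<in> R)}"

lemma equiv_colour_rel: assumes R: "equiv VY R" shows "equiv X (colour_rel R)"
proof (rule equivI)
  show "refl_on X (colour_rel R)"
    using R nbr_VX unfolding refl_on_def colour_rel_def equiv_def by auto
  show "sym (colour_rel R)" using R unfolding colour_rel_def sym_def equiv_def by blast
  show "trans (colour_rel R)" using R unfolding colour_rel_def trans_def equiv_def by blast
qed (auto simp: colour_rel_def)

text \<open>A uniform automorphism acting by m \<in> M fixes each x \<in> VX and maps its
  a-neighbour to its (m a)-neighbour.\<close>
lemma preserves_colour_rel:
  assumes inv: "preserves_rel U R" shows "preserves_rel M (colour_rel R)"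
  unfolding preserves_rel_def
proof (intro ballI, clarify)
  fix m a b assume m: "m \<in> M" and ab: "(a, b) \<in> colour_rel R"
  have "(nbr x (m a), nbr x (m b)) \<in> R" if x: "x \<in> VX" for x
  proof -
    have "m (id (colour_in x)) = colour_in x" using M_fixes_Y[OF m] colour_in_VX[OF x] by simp
    then obtain g where g: "g \<in> U" "g x = x"
      "\<forall>u v. (u, v) \<in> E \<longrightarrow> (g u, g v) \<in> E \<and> c (g u, g v) = m (id (c (u, v)))"
      using ex_uniform_aut[OF m perm_group_on_id[OF perm_N]] by blast
    have g_nbr: "g (nbr x d) = nbr x (m d)" if d: "d \<in> X" for d
    proof -
      have "(x, nbr x d) \<in> E" "c (x, nbr x d) = d" using nbr[of d x] colours_VX[OF x] d by auto
      then have "(x, g (nbr x d)) \<in> E" "c (x, g (nbr x d)) = m d"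
        using g(3)[rule_format, of x "nbr x d"] g(2) by auto
      then show ?thesis using nbr_colour[of x "g (nbr x d)"] by simp
    qed
    have "a \<in> X" "b \<in> X" "(nbr x a, nbr x b) \<in> R" using ab x unfolding colour_rel_def by auto
    then show ?thesis using preserves_relD[OF inv g(1)] g_nbr by metis
  qed
  then show "(m a, m b) \<in> colour_rel R"
    using ab perm_group_on_mem[OF perm_M m] unfolding colour_rel_def by auto
qed

text \<open>A uniform automorphism acting by some \<tau> \<in> N maps x0 to any given x \<in> VX and
  preserves the colours of the arcs leaving x0.\<close>
lemma colour_rel_siblings:
  assumes trans_N: "transitive_on N Y" and inv: "preserves_rel U R"
    and x0: "x0 \<in> VX" "(x0, y) \<in> E" "(x0, y') \<in> E" "(y, y') \<in> R"
  shows "(colour_in y, colour_in y') \<in> colour_rel R"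
proof -
  have "(nbr x (colour_in y), nbr x (colour_in y')) \<in> R" if x: "x \<in> VX" for x
  proof -
    obtain \<tau> where \<tau>: "\<tau> \<in> N" "\<tau> (colour_in x0) = colour_in x"
      using trans_N colour_in_VX x0(1) x unfolding transitive_on_def by blast
    then obtain g where g: "g \<in> U" "g x0 = x"
      "\<forall>u v. (u, v) \<in> E \<longrightarrow> (g u, g v) \<in> E \<and> c (g u, g v) = id (\<tau> (c (u, v)))"
      using ex_uniform_aut[OF perm_group_on_id[OF perm_M] \<tau>(1)] x0(1) x by fastforce
    have "g w = nbr x (colour_in w)" if "(x0, w) \<in> E" for w
    proof -
      have "(x, g w) \<in> E" "c (x, g w) = \<tau> (colour_in w)" using g that colour_in by fastforce+
      moreover have "\<tau> (colour_in w) = colour_in w"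
        using N_fixes_X[OF \<tau>(1)] colour_in_VY arc_from_VX[OF x0(1) that] by blast
      ultimately show ?thesis using nbr_colour by metis
    qed
    then show ?thesis using preserves_relD[OF inv g(1) x0(4)] x0(2,3) by simp
  qed
  moreover have "colour_in y \<in> X" "colour_in y' \<in> X"
    using colour_in_VY[OF arc_from_VX[OF x0(1)]] x0(2,3) by auto
  ultimately show ?thesis unfolding colour_rel_def by blast
qed

lemma siblings_related_everywhere:
  assumes prim: "primitive_on M X" and trans_N: "transitive_on N Y"
    and R: "equiv VY R" and inv: "preserves_rel U R"
    and x0: "x0 \<in> VX" "(x0, y) \<in> E" "(x0, y') \<in> E" "y \<noteq> y'" "(y, y') \<in> R"
    and x: "x \<in> VX" "(x, z) \<in> E" "(x, z') \<in> E"
  shows "(z, z') \<in> R"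
proof -
  have "colour_in y \<noteq> colour_in y'" using colour_in_inj[OF x0(2,3)] x0(4) by blast
  then have "colour_rel R \<noteq> Id_on X"
    using colour_rel_siblings[OF trans_N inv x0(1-3,5)] unfolding Id_on_def by blast
  then have "colour_rel R = X \<times> X"
    using primitive_on_block[OF prim equiv_colour_rel[OF R] preserves_colour_rel[OF inv]] by blast
  moreover have "colour_in z \<in> X" "colour_in z' \<in> X"
    using colour_in_VY[OF arc_from_VX[OF x(1)]] x(2,3) by auto
  ultimately have "(nbr x (colour_in z), nbr x (colour_in z')) \<in> R"
    using x(1) unfolding colour_rel_def by blast
  then show ?thesis using nbr_colour_in x by simp
qed

lemma primitive_box_product_if:
  assumes prim: "primitive_on M X" and nreg: "\<not> regular_on M X" and trans_N: "transitive_on N Y"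
  shows "primitive_on (box_product E VX VY X Y c M N) VY"
  unfolding primitive_on_def
proof (intro conjI allI impI)
  show "transitive_on (box_product E VX VY X Y c M N) VY"
    using prim transitive_box_product unfolding primitive_on_def by blast
  fix R assume h: "equiv VY R \<and> preserves_rel (box_product E VX VY X Y c M N) R"
  then have R: "equiv VY R" and "R \<subseteq> VY \<times> VY" unfolding equiv_def refl_on_def by auto
  then have inv: "preserves_rel U R" using h preserves_box_product_iff by blast
  show "R = Id_on VY \<or> R = VY \<times> VY"
  proof (cases "R = Id_on VY")
    case False
    then obtain y y' where "(y, y') \<in> R" "y \<noteq> y'"
      using R unfolding equiv_def refl_on_def Id_on_def by auto
    then obtain x0 z z' where "x0 \<in> VX" "(x0, z) \<in> E" "(x0, z') \<in> E" "z \<noteq> z'" "(z, z') \<in> R"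
      using ex_related_siblings[OF prim nreg R inv] by blast
    then have "R = VY \<times> VY"
      using related_if_siblings_related[OF R] siblings_related_everywhere[OF prim trans_N R inv] by blast
    then show ?thesis ..
  qed simp
qed

lemma primitive_box_product:
  "primitive_on (box_product E VX VY X Y c M N) VY \<longleftrightarrow>
     primitive_on M X \<and> \<not> regular_on M X \<and> transitive_on N Y"
proof
  assume prim: "primitive_on (box_product E VX VY X Y c M N) VY"
  then have "primitive_on M X"
    using transitive_box_product block_M_if_primitive unfolding primitive_on_def by blast
  then show "primitive_on M X \<and> \<not> regular_on M X \<and> transitive_on N Y"
    using not_regular_M_if_primitive[OF prim] transitive_N_if_primitive[OF prim] by blast
qed (use primitive_box_product_if in blast)

end

theorem theorem5p1:
  fixes X Y :: "'a set" and M N :: "('a \<Rightarrow> 'a) set"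
    and E :: "('v \<times> 'v) set" and VX VY :: "'v set" and c :: "'v \<times> 'v \<Rightarrow> 'a"
  assumes "X \<inter> Y = {}"
    and "\<exists>a\<in>X. \<exists>b\<in>X. a \<noteq> b" and "\<exists>a\<in>Y. \<exists>b\<in>Y. a \<noteq> b"
    and "perm_group_on X M" and "M \<noteq> {id}"
    and "perm_group_on Y N" and "N \<noteq> {id}"
    and "biregular_coloured_tree E VX VY X Y c"
  shows "(transitive_on (box_product E VX VY X Y c M N) VY \<longleftrightarrow> transitive_on M X)
       \<and> (primitive_on (box_product E VX VY X Y c M N) VY \<longleftrightarrow>
            primitive_on M X \<and> \<not> regular_on M X \<and> transitive_on N Y)"
proof -
  interpret box_setting E VX VY X Y c M N
    by unfold_locales (use assms in auto)
  show ?thesis using transitive_box_product primitive_box_product by blast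
qed

end
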